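(* Let $\Pi$ be a Poisson process on $\mathbb{L}$ with intensity $\alpha\mu$, $\alpha>0$. For $n\ge1$ let $Z_n$ be the number of vertices $x$ with $d(\varnothing,x)=n$ such that no line of $\Pi$ meets the geodesic segment $[\![\varnothing,x]\!]$. Let $\mathcal{F}_n$ be the $\sigma$-algebra generated by the restriction of $\Pi$ to lines meeting $\{x:d(\varnothing,x)\le n\}$. Then for every $n\ge1$, conditionally on $\mathcal{F}_n$, $Z_{n+1}$ is distributed as a sum of $Z_n$ independent $\mathrm{Binomial}(2,e^{-\alpha/4})$ random variables. In particular, $(Z_n)_{n\ge1}$ is a Galton–Watson branching process with offspring law $\mathrm{Binomial}(2,e^{-\alpha/4})$.
   Context: $\mathbb{T}$ is the $3$-regular tree with graph distance $d$ and root $\varnothing$. A line is the vertex set of a bi-infinite geodesic, and $\mathbb{L}$ is the set of lines. $\mu$ is the unique Borel measure on $\mathbb{L}$ invariant under graph automorphisms with $\mu\{\ell:\ell\ni x,\ \ell\ni y\}=2^{-d(x,y)}$ for all $x\neq y$. *)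

theory Defs
  imports "HOL-Probability.Probability"
begin

text \<open>Vertices are words: the root is the empty word, the root has the three
children [0],[1],[2], every other vertex x has the two children x@[0], x@[1].\<close>

definition tverts :: "nat list set" where
  "tverts = {xs. xs = [] \<or> (hd xs < 3 \<and> (\<forall>a\<in>set (tl xs). a < 2))}"

definition troot :: "nat list" where
  "troot = []"

definition tadj :: "nat list \<Rightarrow> nat list \<Rightarrow> bool" where
  "tadj x y \<longleftrightarrow> x \<in> tverts \<and> y \<in> tverts \<and> ((\<exists>a. y = x @ [a]) \<or> (\<exists>a. x = y @ [a]))"

definition tdist :: "nat list \<Rightarrow> nat list \<Rightarrow> nat" where
  "tdist x y = (LEAST n. \<exists>p::nat \<Rightarrow> nat list. p 0 = x \<and> p n = y \<and>
                            (\<forall>i<n. tadj (p i) (p (Suc i))))"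

definition tsegment :: "nat list \<Rightarrow> nat list \<Rightarrow> nat list set" where
  "tsegment a b = {y \<in> tverts. tdist a y + tdist y b = tdist a b}"

definition tlines :: "nat list set set" where
  "tlines = {S. \<exists>g::int \<Rightarrow> nat list. (\<forall>i. g i \<in> tverts) \<and>
                 (\<forall>i j. tdist (g i) (g j) = nat \<bar>i - j\<bar>) \<and> S = range g}"

definition tautom :: "(nat list \<Rightarrow> nat list) \<Rightarrow> bool" where
  "tautom \<sigma> \<longleftrightarrow> bij_betw \<sigma> tverts tverts \<and>
     (\<forall>x\<in>tverts. \<forall>y\<in>tverts. tadj (\<sigma> x) (\<sigma> y) \<longleftrightarrow> tadj x y)"

text \<open>Borel sigma-algebra on the set of lines (lines viewed as elements of the
product space {0,1}^V; generated by the cylinders "the line contains x").\<close>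
definition lines_space :: "nat list set measure" where
  "lines_space = sigma tlines {{l \<in> tlines. x \<in> l} | x. x \<in> tverts}"

definition is_line_measure :: "nat list set measure \<Rightarrow> bool" where
  "is_line_measure \<mu> \<longleftrightarrow>
     sets \<mu> = sets lines_space \<and>
     (\<forall>\<sigma>. tautom \<sigma> \<longrightarrow> (\<forall>A\<in>sets \<mu>.
        emeasure \<mu> ((\<lambda>l. \<sigma> ` l) -` A \<inter> tlines) = emeasure \<mu> A)) \<and>
     (\<forall>x\<in>tverts. \<forall>y\<in>tverts. x \<noteq> y \<longrightarrow>
        emeasure \<mu> {l \<in> tlines. x \<in> l \<and> y \<in> l} = ennreal ((1/2) ^ tdist x y))"

definition ncount :: "'a set \<Rightarrow> 'a set \<Rightarrow> enat" where
  "ncount S A = (if finite (S \<inter> A) then enat (card (S \<inter> A)) else \<infinity>)"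

definition poisson_process :: "'w measure \<Rightarrow> 'a measure \<Rightarrow> ('w \<Rightarrow> 'a set) \<Rightarrow> bool" where
  "poisson_process M \<nu> PP \<longleftrightarrow>
     prob_space M \<and>
     (\<forall>\<omega>\<in>space M. PP \<omega> \<subseteq> space \<nu>) \<and>
     (\<forall>A\<in>sets \<nu>. (\<lambda>\<omega>. ncount (PP \<omega>) A) \<in> measurable M (count_space UNIV)) \<and>
     (\<forall>A\<in>sets \<nu>. emeasure \<nu> A < \<infinity> \<longrightarrow> (\<forall>k::nat.
        measure M {\<omega> \<in> space M. ncount (PP \<omega>) A = enat k} =
          (enn2real (emeasure \<nu> A)) ^ k / fact k * exp (- enn2real (emeasure \<nu> A)))) \<and>
     (\<forall>A\<in>sets \<nu>. emeasure \<nu> A = \<infinity> \<longrightarrow>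
        (AE \<omega> in M. ncount (PP \<omega>) A = \<infinity>)) \<and>
     (\<forall>(I::nat set) A. finite I \<longrightarrow> (\<forall>i\<in>I. A i \<in> sets \<nu>) \<longrightarrow> disjoint_family_on A I \<longrightarrow>
        prob_space.indep_vars M (\<lambda>_. count_space UNIV) (\<lambda>i \<omega>. ncount (PP \<omega>) (A i)) I)"

definition Zcount :: "nat list set set \<Rightarrow> nat \<Rightarrow> nat" where
  "Zcount P n = card {x \<in> tverts. tdist troot x = n \<and>
                       (\<forall>l\<in>P. l \<inter> tsegment troot x = {})}"

definition lines_meeting_ball :: "nat \<Rightarrow> nat list set set" where
  "lines_meeting_ball n = {l \<in> tlines. \<exists>x\<in>l. tdist troot x \<le> n}"

text \<open>F_n: sigma-algebra generated by the restriction of Pi to lines meeting the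
ball of radius n (i.e. by the counts of Pi in measurable subsets of those lines).\<close>
definition Fn :: "'w measure \<Rightarrow> ('w \<Rightarrow> nat list set set) \<Rightarrow> nat \<Rightarrow> 'w measure" where
  "Fn M PP n = sigma (space M)
     {(\<lambda>\<omega>. ncount (PP \<omega>) A) -` B \<inter> space M | A B.
        A \<in> sets lines_space \<and> A \<subseteq> lines_meeting_ball n}"

definition iid_sum_pmf :: "nat \<Rightarrow> nat pmf \<Rightarrow> nat pmf" where
  "iid_sum_pmf m q = map_pmf (\<lambda>f. \<Sum>i<m. f i) (Pi_pmf {..<m} 0 (\<lambda>_. q))"

definition cond_iid_sum :: "'w measure \<Rightarrow> 'w measure \<Rightarrow> ('w \<Rightarrow> nat) \<Rightarrow> ('w \<Rightarrow> nat) \<Rightarrow> nat pmf \<Rightarrow> bool" where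
  "cond_iid_sum M F Y X q \<longleftrightarrow> (\<forall>k::nat.
     AE \<omega> in M. real_cond_exp M F (indicator {\<omega>\<in>space M. Y \<omega> = k}) \<omega> =
                 pmf (iid_sum_pmf (X \<omega>) q) k)"

definition hist :: "'w measure \<Rightarrow> (nat \<Rightarrow> 'w \<Rightarrow> nat) \<Rightarrow> nat \<Rightarrow> 'w measure" where
  "hist M Z n = sigma (space M) {Z i -` B \<inter> space M | i B. 1 \<le> i \<and> i \<le> n}"

definition galton_watson :: "'w measure \<Rightarrow> (nat \<Rightarrow> 'w \<Rightarrow> nat) \<Rightarrow> nat pmf \<Rightarrow> bool" where
  "galton_watson M Z q \<longleftrightarrow> (\<forall>n\<ge>1. cond_iid_sum M (hist M Z n) (Z (Suc n)) (Z n) q)"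

end

theory Submission
  imports Defs
begin

text \<open>A line has a unique vertex closest to the root, its top, and the lines topped at a vertex
  \<open>c\<close> are exactly those through both children of \<open>c\<close>; they have \<open>\<mu>\<close>-mass \<open>1/4\<close>. A child
  \<open>x @ [a]\<close> of a surviving vertex \<open>x\<close> at depth \<open>n \<ge> 1\<close> survives iff no line of \<open>\<Pi>\<close> is topped at
  \<open>x @ [a]\<close>. These sets of lines are disjoint for different children and disjoint from the
  lines meeting the \<open>n\<close>-ball, so by the Poisson property the survivals of the children are
  independent events of probability \<open>exp (- \<alpha> / 4)\<close>, independent of \<open>\<F>\<^sub>n\<close>. Conditioning on the
  (\<open>\<F>\<^sub>n\<close>-measurable) set of survivors at depth \<open>n\<close> gives the conditional law of \<open>Z\<^sub>n\<^sub>+\<^sub>1\<close>,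
  and the tower property transfers it to the coarser natural filtration of \<open>Z\<close>.\<close>

section \<open>Independence, binomial laws and conditional expectations\<close>

lemma measurable_Collect_mem:
  assumes "g \<in> measurable M N" "B \<in> sets N"
  shows "{\<omega> \<in> space M. g \<omega> \<in> B} \<in> sets M"
proof -
  have "g -` B \<inter> space M \<in> sets M" by (rule measurable_sets[OF assms])
  moreover have "g -` B \<inter> space M = {\<omega> \<in> space M. g \<omega> \<in> B}" by blast
  ultimately show ?thesis by simp
qed

lemma (in prob_space) indep_sets_reindex:
  assumes f: "inj_on f I" and indep: "indep_sets F (f ` I)"
  shows "indep_sets (\<lambda>i. F (f i)) I"
  unfolding indep_sets_def
proof (intro conjI ballI allI impI)
  show "F (f i) \<subseteq> events" if "i \<in> I" for i
    using indep that unfolding indep_sets_def by blast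
next
  fix J A assume J: "J \<subseteq> I" "J \<noteq> {}" "finite J" and A: "A \<in> (\<Pi> j\<in>J. F (f j))"
  define A' where "A' y = A (the_inv_into J f y)" for y
  have fJ: "inj_on f J" using f J(1) by (rule inj_on_subset)
  have A'f: "A' (f j) = A j" if "j \<in> J" for j
    unfolding A'_def using the_inv_into_f_f[OF fJ that] by simp
  have "A' \<in> (\<Pi> y\<in>f ` J. F y)" using A A'f by auto
  then have "prob (\<Inter>y\<in>f ` J. A' y) = (\<Prod>y\<in>f ` J. prob (A' y))"
    using indep J unfolding indep_sets_def by (metis finite_imageI image_is_empty image_mono)
  then show "prob (\<Inter>j\<in>J. A j) = (\<Prod>j\<in>J. prob (A j))"
    using A'f by (simp add: prod.reindex[OF fJ])
qed

lemma (in prob_space) indep_vars_reindex: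
  assumes "inj_on f I" "indep_vars M' X (f ` I)"
  shows "indep_vars (\<lambda>i. M' (f i)) (\<lambda>i. X (f i)) I"
  using assms indep_sets_reindex[OF assms(1), of "\<lambda>j. {X j -` A \<inter> space M | A. A \<in> sets (M' j)}"]
  unfolding indep_vars_def2 by auto

lemma (in prob_space) indep_set_sigma_sets:
  assumes "indep_set A B" "Int_stable A" "Int_stable B"
  shows "indep_set (sigma_sets (space M) A) (sigma_sets (space M) B)"
proof -
  have "indep_sets (\<lambda>i. sigma_sets (space M) (case_bool A B i)) UNIV"
    using assms unfolding indep_set_def by (intro indep_sets_sigma) (auto split: bool.split)
  moreover have "(\<lambda>i. sigma_sets (space M) (case_bool A B i)) =
                 case_bool (sigma_sets (space M) A) (sigma_sets (space M) B)"
    by (rule ext) (simp split: bool.split)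
  ultimately show ?thesis unfolding indep_set_def by simp
qed

lemma pmf_binomial_2:
  assumes "0 \<le> p" "p \<le> 1"
  shows "pmf (binomial_pmf 2 p) j =
    (if j = 0 then (1 - p)\<^sup>2 else if j = 1 then 2 * p * (1 - p) else if j = 2 then p\<^sup>2 else 0)"
  using pmf_binomial[OF assms, of 2 j]
  by (cases "j = 0"; cases "j = 1"; cases "j = 2") (auto simp: numeral_2_eq_2)

lemma (in prob_space) prob_count_two_events:
  assumes E: "E1 \<in> events" "E2 \<in> events" and p: "prob E1 = p" "prob E2 = p"
    and indep: "prob (E1 \<inter> E2) = p * p"
  shows "prob {\<omega> \<in> space M. of_bool (\<omega> \<in> E1) + of_bool (\<omega> \<in> E2) = j} = pmf (binomial_pmf 2 p) j"
proof -
  have p01: "0 \<le> p" "p \<le> 1" using p by auto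
  have union: "prob (E1 \<union> E2) = 2 * p - p * p"
    using finite_measure_Union'[OF E] finite_measure_Diff'[OF E(2,1)] p indep by (simp add: Int_commute)
  have E12: "E1 \<inter> E2 \<subseteq> E1 \<union> E2" "E1 \<inter> E2 \<in> events" "E1 \<union> E2 \<in> events" using E by auto
  have sub: "E1 \<subseteq> space M" "E2 \<subseteq> space M" using E sets.sets_into_space by auto
  consider "j = 0" | "j = 1" | "j = 2" | "j > 2" by linarith
  then show ?thesis
  proof cases
    case 1
    then have "{\<omega> \<in> space M. of_bool (\<omega> \<in> E1) + of_bool (\<omega> \<in> E2) = j} = space M - (E1 \<union> E2)"
      by auto
    then show ?thesis using 1 prob_compl[OF E12(3)] union p01
      by (simp add: pmf_binomial_2 power2_eq_square algebra_simps)
  next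
    case 2
    then have "{\<omega> \<in> space M. of_bool (\<omega> \<in> E1) + of_bool (\<omega> \<in> E2) = j} = (E1 \<union> E2) - (E1 \<inter> E2)"
      using sub by auto
    then show ?thesis using 2 finite_measure_Diff[OF E12(3,2,1)] union indep p01
      by (simp add: pmf_binomial_2 algebra_simps)
  next
    case 3
    then have "{\<omega> \<in> space M. of_bool (\<omega> \<in> E1) + of_bool (\<omega> \<in> E2) = j} = E1 \<inter> E2"
      using sub by auto
    then show ?thesis using 3 indep p01 by (simp add: pmf_binomial_2 power2_eq_square)
  next
    case 4
    then have "{\<omega> \<in> space M. of_bool (\<omega> \<in> E1) + of_bool (\<omega> \<in> E2) = j} = {}" by auto
    then show ?thesis using 4 p01 by (simp add: pmf_binomial_2)
  qed
qed

lemma (in prob_space) prob_Int_sum_eq: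
  fixes X Y :: "'a \<Rightarrow> nat"
  assumes A: "A \<in> events"
    and X: "\<And>j. {\<omega> \<in> space M. X \<omega> = j} \<in> events" and Y: "\<And>j. {\<omega> \<in> space M. Y \<omega> = j} \<in> events"
  shows "prob (A \<inter> {\<omega> \<in> space M. X \<omega> + Y \<omega> = k}) =
         (\<Sum>j\<le>k. prob ((A \<inter> {\<omega> \<in> space M. Y \<omega> = k - j}) \<inter> {\<omega> \<in> space M. X \<omega> = j}))"
proof -
  have "A \<inter> {\<omega> \<in> space M. X \<omega> + Y \<omega> = k} =
        (\<Union>j\<le>k. (A \<inter> {\<omega> \<in> space M. Y \<omega> = k - j}) \<inter> {\<omega> \<in> space M. X \<omega> = j})"
    by auto
  moreover have "disjoint_family_on (\<lambda>j. (A \<inter> {\<omega> \<in> space M. Y \<omega> = k - j}) \<inter> {\<omega> \<in> space M. X \<omega> = j}) {..k}"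
    unfolding disjoint_family_on_def by auto
  ultimately show ?thesis
    using A X Y by (simp add: finite_measure_finite_Union image_subset_iff sets.Int)
qed

lemma (in prob_space) prob_Int_eq_integral_partition:
  fixes S :: "'a \<Rightarrow> 'b" and c :: "'b \<Rightarrow> real"
  assumes P: "finite P" "\<And>\<omega>. \<omega> \<in> space M \<Longrightarrow> S \<omega> \<in> P"
    and S: "\<And>T. {\<omega> \<in> space M. S \<omega> = T} \<in> events" and A: "A \<in> events" and E: "E \<in> events"
    and c: "\<And>T. T \<in> P \<Longrightarrow>
              prob (A \<inter> {\<omega> \<in> space M. S \<omega> = T} \<inter> E) = prob (A \<inter> {\<omega> \<in> space M. S \<omega> = T}) * c T"
  shows "prob (A \<inter> E) = (\<integral>\<omega>. indicator A \<omega> * c (S \<omega>) \<partial>M)"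
proof -
  let ?A = "\<lambda>T. A \<inter> {\<omega> \<in> space M. S \<omega> = T}"
  have AT: "?A T \<in> events" for T using A S by blast
  have "A \<inter> E = (\<Union>T\<in>P. ?A T \<inter> E)" using P(2) A sets.sets_into_space by blast
  moreover have "prob (\<Union>T\<in>P. ?A T \<inter> E) = (\<Sum>T\<in>P. prob (?A T \<inter> E))"
    by (rule finite_measure_finite_Union) (use P(1) AT E in \<open>auto simp: disjoint_family_on_def\<close>)
  ultimately have "prob (A \<inter> E) = (\<Sum>T\<in>P. prob (?A T \<inter> E))" by simp
  also have "\<dots> = (\<Sum>T\<in>P. \<integral>\<omega>. c T * indicator (?A T) \<omega> \<partial>M)"
    using c AT by (simp add: mult.commute)
  also have "\<dots> = (\<integral>\<omega>. (\<Sum>T\<in>P. c T * indicator (?A T) \<omega>) \<partial>M)"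
    using AT by (intro Bochner_Integration.integral_sum[symmetric]) (simp add: integrable_real_indicator emeasure_eq_measure)
  also have "\<dots> = (\<integral>\<omega>. indicator A \<omega> * c (S \<omega>) \<partial>M)"
  proof (rule Bochner_Integration.integral_cong[OF refl])
    fix \<omega> assume "\<omega> \<in> space M"
    then show "(\<Sum>T\<in>P. c T * indicator (?A T) \<omega>) = indicator A \<omega> * c (S \<omega>)"
      using P by (simp add: indicator_def sum.delta'[where a = "S \<omega>" for \<omega>] if_distrib cong: if_cong)
  qed
  finally show ?thesis .
qed

lemma (in prob_space) real_cond_exp_indicator_eqI:
  assumes F: "subalgebra M F" and E: "E \<in> events"
    and g: "g \<in> borel_measurable F" and bounded: "\<And>\<omega>. \<bar>g \<omega>\<bar> \<le> B"
    and prob: "\<And>A. A \<in> sets F \<Longrightarrow> prob (A \<inter> E) = (\<integral>\<omega>. indicator A \<omega> * g \<omega> \<partial>M)"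
  shows "AE \<omega> in M. real_cond_exp M F (indicator E) \<omega> = g \<omega>"
proof -
  interpret finite_measure_subalgebra M F by unfold_locales (rule F)
  have gM: "g \<in> borel_measurable M" by (rule measurable_from_subalg[OF F g])
  show ?thesis
  proof (rule real_cond_exp_charact)
    fix A assume A: "A \<in> sets F"
    then have "A \<in> events" using F unfolding subalgebra_def by blast
    then have "(\<integral>\<omega>\<in>A. indicator E \<omega> \<partial>M) = prob (A \<inter> E)"
      using E unfolding set_lebesgue_integral_def
      by (simp add: indicator_inter_arith[symmetric] integral_indicator emeasure_eq_measure)
    then show "(\<integral>\<omega>\<in>A. indicator E \<omega> \<partial>M) = (\<integral>\<omega>\<in>A. g \<omega> \<partial>M)"
      using prob[OF A] unfolding set_lebesgue_integral_def by simp
  qed (use E gM g bounded in \<open>auto intro: integrable_const_bound[where B = B]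
        simp: integrable_real_indicator emeasure_eq_measure\<close>)
qed

lemma (in prob_space) real_cond_exp_subalgebra_eqI:
  assumes F: "subalgebra M F" and H: "subalgebra F H" and f: "integrable M f"
    and fg: "AE \<omega> in M. real_cond_exp M F f \<omega> = g \<omega>"
    and gH: "g \<in> borel_measurable H" and g: "integrable M g"
  shows "AE \<omega> in M. real_cond_exp M H f \<omega> = g \<omega>"
proof -
  have HM: "subalgebra M H" using F H unfolding subalgebra_def by auto
  interpret finite_measure_subalgebra M H by unfold_locales (rule HM)
  have "AE \<omega> in M. real_cond_exp M H (real_cond_exp M F f) \<omega> = real_cond_exp M H f \<omega>"
    by (rule real_cond_exp_nested_subalg[OF F H f])
  moreover have "AE \<omega> in M. real_cond_exp M H (real_cond_exp M F f) \<omega> = real_cond_exp M H g \<omega>"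
    by (rule real_cond_exp_cong[OF fg borel_measurable_cond_exp2 integrableD(1)[OF g]])
  moreover have "AE \<omega> in M. real_cond_exp M H g \<omega> = g \<omega>"
    by (rule real_cond_exp_F_meas[OF g gH])
  ultimately show ?thesis by eventually_elim simp
qed

lemma sets_hist: "sets (hist M Z n) = sigma_sets (space M) {Z i -` B \<inter> space M | i B. 1 \<le> i \<and> i \<le> n}"
  unfolding hist_def by (rule sets_measure_of) blast

lemma space_hist [simp]: "space (hist M Z n) = space M"
  unfolding hist_def by (simp add: space_measure_of_conv)

lemma measurable_hist:
  assumes "1 \<le> i" "i \<le> n"
  shows "Z i \<in> measurable (hist M Z n) (count_space UNIV)"
proof (rule measurableI)
  fix B :: "nat set"
  have "Z i -` B \<inter> space M \<in> {Z i -` B \<inter> space M | i B. 1 \<le> i \<and> i \<le> n}" using assms by blast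
  then show "Z i -` B \<inter> space (hist M Z n) \<in> sets (hist M Z n)"
    unfolding sets_hist space_hist by (rule sigma_sets.Basic)
qed simp

lemma iid_sum_pmf_0: "iid_sum_pmf 0 q = return_pmf 0"
  unfolding iid_sum_pmf_def by simp

lemma iid_sum_pmf_Suc:
  "iid_sum_pmf (Suc m) q = map_pmf (\<lambda>(y, s). y + s) (pair_pmf q (iid_sum_pmf m q))"
proof -
  have "iid_sum_pmf (Suc m) q =
        map_pmf (\<lambda>f. \<Sum>i<Suc m. f i) (Pi_pmf (insert m {..<m}) 0 (\<lambda>_. q))"
    unfolding iid_sum_pmf_def lessThan_Suc ..
  also have "\<dots> = map_pmf (\<lambda>f. \<Sum>i<Suc m. f i)
                    (map_pmf (\<lambda>(y, f). f(m := y)) (pair_pmf q (Pi_pmf {..<m} 0 (\<lambda>_. q))))"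
    by (subst Pi_pmf_insert) simp_all
  also have "\<dots> = map_pmf (\<lambda>(y, f). y + (\<Sum>i<m. f i)) (pair_pmf q (Pi_pmf {..<m} 0 (\<lambda>_. q)))"
    unfolding pmf.map_comp by (intro map_pmf_cong) (auto simp: lessThan_Suc add.commute intro!: sum.cong)
  also have "\<dots> = map_pmf (\<lambda>(y, s). y + s) (pair_pmf q (iid_sum_pmf m q))"
    unfolding iid_sum_pmf_def pair_map_pmf2 pmf.map_comp by (rule map_pmf_cong) auto
  finally show ?thesis .
qed

lemma pmf_sum_pair_pmf:
  fixes p q :: "nat pmf"
  shows "pmf (map_pmf (\<lambda>(y, s). y + s) (pair_pmf p q)) k = (\<Sum>j\<le>k. pmf p j * pmf q (k - j))"
proof -
  have vimage: "(\<lambda>(y, s). y + s) -` {k} = (\<lambda>j. (j, k - j)) ` {..k}" by force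
  have "inj_on (\<lambda>j. (j, k - j)) {..k}" by (rule inj_onI) simp
  then show ?thesis
    by (simp add: pmf_map vimage measure_measure_pmf_finite sum.reindex pmf_pair)
qed

lemma pmf_iid_sum_pmf_Suc:
  "pmf (iid_sum_pmf (Suc m) q) k = (\<Sum>j\<le>k. pmf q j * pmf (iid_sum_pmf m q) (k - j))"
  unfolding iid_sum_pmf_Suc by (rule pmf_sum_pair_pmf)

section \<open>Distances and lines in the tree\<close>

fun lcp :: "nat list \<Rightarrow> nat list \<Rightarrow> nat" where
  "lcp (a#x) (b#y) = (if a = b then Suc (lcp x y) else 0)"
| "lcp _ _ = 0"

text \<open>The tree distance in closed form: from \<open>x\<close> up to the longest common prefix, then down to \<open>y\<close>.\<close>

definition wdist :: "nat list \<Rightarrow> nat list \<Rightarrow> nat" where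
  "wdist x y = length x + length y - 2 * lcp x y"

lemma lcp_le_length_left: "lcp x y \<le> length x"
  by (induction x y rule: lcp.induct) auto

lemma lcp_le_length_right: "lcp x y \<le> length y"
  by (induction x y rule: lcp.induct) auto

lemma take_lcp: "take (lcp x y) x = take (lcp x y) y"
  by (induction x y rule: lcp.induct) auto

lemma le_lcpI: "take k x = take k y \<Longrightarrow> k \<le> length x \<Longrightarrow> k \<le> length y \<Longrightarrow> k \<le> lcp x y"
proof (induction x y arbitrary: k rule: lcp.induct)
  case (1 a x b y)
  then show ?case by (cases k) auto
qed auto

lemma lcp_snoc: "lcp x y \<le> lcp x (y @ [a]) \<and> lcp x (y @ [a]) \<le> Suc (lcp x y)"
proof (induction x arbitrary: y)
  case (Cons b x)
  then show ?case by (cases y) auto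
qed simp

lemma wdist_snoc_le: "wdist x (y @ [a]) \<le> Suc (wdist x y)"
  using lcp_snoc[of x y a] lcp_le_length_left[of x y] lcp_le_length_right[of x y]
    lcp_le_length_left[of x "y @ [a]"] lcp_le_length_right[of x "y @ [a]"]
  unfolding wdist_def by (simp only: length_append list.size) linarith

lemma wdist_le_snoc: "wdist x y \<le> Suc (wdist x (y @ [a]))"
  using lcp_snoc[of x y a] lcp_le_length_left[of x y] lcp_le_length_right[of x y]
    lcp_le_length_left[of x "y @ [a]"] lcp_le_length_right[of x "y @ [a]"]
  unfolding wdist_def by (simp only: length_append list.size) linarith

lemma wdist_tadj_le: "tadj u v \<Longrightarrow> wdist x v \<le> Suc (wdist x u)"
  unfolding tadj_def using wdist_snoc_le wdist_le_snoc by auto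

lemma wdist_self: "wdist x x = 0"
proof -
  have "length x \<le> lcp x x" using le_lcpI[of "length x" x x] by simp
  then show ?thesis unfolding wdist_def by simp
qed

lemma wdist_path_le: "p 0 = x \<Longrightarrow> (\<forall>i<n. tadj (p i) (p (Suc i))) \<Longrightarrow> wdist x (p n) \<le> n"
proof (induction n)
  case 0
  then show ?case using wdist_self by simp
next
  case (Suc n)
  then have "wdist x (p n) \<le> n" by auto
  moreover have "wdist x (p (Suc n)) \<le> Suc (wdist x (p n))" using Suc.prems wdist_tadj_le by auto
  ultimately show ?case by simp
qed

lemma tverts_take: "x \<in> tverts \<Longrightarrow> take k x \<in> tverts"
  unfolding tverts_def by (cases x; cases k) (auto dest: in_set_takeD)

lemma tverts_snoc: "x \<in> tverts \<Longrightarrow> x \<noteq> [] \<Longrightarrow> a < 2 \<Longrightarrow> x @ [a] \<in> tverts"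
  unfolding tverts_def by (cases x) auto

lemma tverts_snoc_iff: "x \<noteq> [] \<Longrightarrow> x @ [a] \<in> tverts \<longleftrightarrow> x \<in> tverts \<and> a < 2"
  unfolding tverts_def by (cases x) auto

lemma wdist_path:
  assumes "x \<in> tverts" "y \<in> tverts"
  shows "\<exists>p. p 0 = x \<and> p (wdist x y) = y \<and> (\<forall>i<wdist x y. tadj (p i) (p (Suc i)))"
proof -
  let ?l = "lcp x y"
  let ?a = "length x - ?l"
  define p where "p i = (if i \<le> ?a then take (length x - i) x else take (?l + (i - ?a)) y)" for i
  have l1: "?l \<le> length x" and l2: "?l \<le> length y" by (rule lcp_le_length_left, rule lcp_le_length_right)
  have tk: "take ?l x = take ?l y" by (rule take_lcp)
  have Dv: "wdist x y = ?a + (length y - ?l)" unfolding wdist_def using l1 l2 by simp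
  have "p 0 = x" unfolding p_def by simp
  moreover have "p (wdist x y) = y" unfolding p_def Dv using l1 l2 tk by auto
  moreover have "tadj (p i) (p (Suc i))" if i: "i < wdist x y" for i
  proof (cases "Suc i \<le> ?a")
    case True
    have e1: "p i = take (length x - i) x" unfolding p_def using True by simp
    have e2: "p (Suc i) = take (length x - Suc i) x" unfolding p_def using True by simp
    have "p i = p (Suc i) @ [x ! (length x - Suc i)]" unfolding e1 e2 using True
      by (simp add: take_Suc_conv_app_nth[symmetric] Suc_diff_Suc)
    moreover have "p i \<in> tverts" "p (Suc i) \<in> tverts" by (simp_all add: e1 e2 tverts_take assms)
    ultimately show ?thesis unfolding tadj_def by blast
  next
    case False
    then have ia: "?a \<le> i" by simp
    have e1: "p i = take (?l + (i - ?a)) y" using ia unfolding p_def using tk l1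
      by (cases "i = ?a") (auto simp: diff_diff_cancel)
    have e2: "p (Suc i) = take (?l + (i - ?a)) y @ [y ! (?l + (i - ?a))]" unfolding p_def using False i Dv
      by (simp add: take_Suc_conv_app_nth[symmetric] Suc_diff_le ia)
    have e3: "p (Suc i) = take (Suc i - ?a + ?l) y" unfolding p_def using False by (simp add: add.commute)
    have "p i \<in> tverts" "p (Suc i) \<in> tverts" unfolding e1 e3 by (simp_all add: tverts_take assms)
    moreover have "p (Suc i) = p i @ [y ! (?l + (i - ?a))]" using e1 e2 by simp
    ultimately show ?thesis unfolding tadj_def by blast
  qed
  ultimately show ?thesis by blast
qed

lemma tdist_eq_wdist:
  assumes "x \<in> tverts" "y \<in> tverts"
  shows "tdist x y = wdist x y"
  unfolding tdist_def
proof (rule Least_equality)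
  show "\<exists>p. p 0 = x \<and> p (wdist x y) = y \<and> (\<forall>i<wdist x y. tadj (p i) (p (Suc i)))"
    by (rule wdist_path[OF assms])
next
  fix n assume "\<exists>p. p 0 = x \<and> p n = y \<and> (\<forall>i<n. tadj (p i) (p (Suc i)))"
  then show "wdist x y \<le> n" using wdist_path_le by blast
qed

lemma tdist_root: "x \<in> tverts \<Longrightarrow> tdist troot x = length x"
  using tdist_eq_wdist[of troot x] unfolding troot_def wdist_def by (simp add: tverts_def)

lemma wdist_eq_1D: "wdist x y = 1 \<Longrightarrow> (\<exists>a. y = x @ [a]) \<or> (\<exists>a. x = y @ [a])"
proof -
  assume d: "wdist x y = 1"
  let ?l = "lcp x y"
  have l1: "?l \<le> length x" and l2: "?l \<le> length y" by (rule lcp_le_length_left, rule lcp_le_length_right)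
  have tk: "take ?l x = take ?l y" by (rule take_lcp)
  have "length x + length y = 2 * ?l + 1" using d l1 l2 unfolding wdist_def by simp
  then have "(length x = ?l \<and> length y = Suc ?l) \<or> (length y = ?l \<and> length x = Suc ?l)"
    using l1 l2 by linarith
  then show ?thesis
  proof
    assume h: "length x = ?l \<and> length y = Suc ?l"
    then have "y = take ?l y @ [y ! ?l]" by (metis lessI take_Suc_conv_app_nth take_all_iff order_refl)
    then show ?thesis using tk h by (metis take_all_iff order_refl)
  next
    assume h: "length y = ?l \<and> length x = Suc ?l"
    then have "x = take ?l x @ [x ! ?l]" by (metis lessI take_Suc_conv_app_nth take_all_iff order_refl)
    then show ?thesis using tk h by (metis take_all_iff order_refl)
  qed
qed

lemma wdist_snoc_snoc: "wdist (c @ [a]) (c @ [b]) = (if a = b then 0 else 2)"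
proof -
  have "lcp (c@[a]) (c@[b]) = length c + (if a = b then 1 else 0)"
    by (induction c) auto
  then show ?thesis unfolding wdist_def by auto
qed

lemma wdist_eq_iff_prefix: "wdist y x = length x - length y \<longleftrightarrow> take (length y) x = y"
proof
  assume h: "wdist y x = length x - length y"
  have l1: "lcp y x \<le> length y" and l2: "lcp y x \<le> length x" by (rule lcp_le_length_left, rule lcp_le_length_right)
  have "lcp y x = length y" using h l1 l2 unfolding wdist_def by linarith
  then show "take (length y) x = y" using take_lcp[of y x] by (metis take_all_iff order_refl)
next
  assume h: "take (length y) x = y"
  then have ly: "length y \<le> length x" by (metis length_take min.cobounded1)
  have "length y \<le> lcp y x" using le_lcpI[of "length y" y x] h ly by simp
  then show "wdist y x = length x - length y" using lcp_le_length_left[of y x] unfolding wdist_def by simp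
qed

lemma tsegment_root:
  assumes "x \<in> tverts"
  shows "tsegment troot x = {take k x | k. k \<le> length x}"
proof -
  have "y \<in> tsegment troot x \<longleftrightarrow> (\<exists>k\<le>length x. y = take k x)" for y
  proof
    assume "y \<in> tsegment troot x"
    then have y: "y \<in> tverts" "length y + wdist y x = length x"
      unfolding tsegment_def using tdist_root tdist_eq_wdist assms by auto
    then have "take (length y) x = y" using wdist_eq_iff_prefix by (metis add_diff_cancel_left')
    then show "\<exists>k\<le>length x. y = take k x" using y by (metis le_add1)
  next
    assume "\<exists>k\<le>length x. y = take k x"
    then obtain k where k: "k \<le> length x" "y = take k x" by auto
    then have "wdist y x = length x - length y" using wdist_eq_iff_prefix[of y x] by (simp add: min_def)
    then show "y \<in> tsegment troot x" unfolding tsegment_def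
      using tdist_root tdist_eq_wdist assms tverts_take k by auto
  qed
  then show ?thesis by auto
qed

definition geodesic :: "(int \<Rightarrow> nat list) \<Rightarrow> bool" where
  "geodesic g \<longleftrightarrow> (\<forall>i. g i \<in> tverts) \<and> (\<forall>i j. tdist (g i) (g j) = nat \<bar>i - j\<bar>)"

lemma tlines_iff_geodesic: "l \<in> tlines \<longleftrightarrow> (\<exists>g. geodesic g \<and> l = range g)"
  unfolding tlines_def geodesic_def by auto

lemma geodesic_wdist: "geodesic g \<Longrightarrow> wdist (g i) (g j) = nat \<bar>i - j\<bar>"
  unfolding geodesic_def using tdist_eq_wdist by metis

lemma geodesic_tverts: "geodesic g \<Longrightarrow> g i \<in> tverts"
  unfolding geodesic_def by auto

lemma geodesic_reflect: "geodesic g \<Longrightarrow> geodesic (\<lambda>i. g (- i))"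
  unfolding geodesic_def by (auto simp: abs_minus_commute)

lemma geodesic_step: "geodesic g \<Longrightarrow> (\<exists>a. g (i+1) = g i @ [a]) \<or> (\<exists>a. g i = g (i+1) @ [a])"
  using geodesic_wdist[of g i "i+1"] wdist_eq_1D by simp

lemma geodesic_length_Suc_step:
  assumes g: "geodesic g" and h: "length (g (k+1)) = Suc (length (g k))"
  shows "length (g (k+2)) = Suc (length (g (k+1)))"
proof -
  obtain a where a: "g (k+1) = g k @ [a]" using geodesic_step[OF g, of k] h by auto
  have "\<not> (\<exists>b. g (k+1) = g (k+1+1) @ [b])"
  proof
    assume "\<exists>b. g (k+1) = g (k+1+1) @ [b]"
    then obtain b where "g (k+1) = g (k+2) @ [b]" by (auto simp: add.assoc)
    then have "g (k+2) = g k" using a by simp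
    then have "wdist (g k) (g (k+2)) = 0" using wdist_self by simp
    moreover have "wdist (g k) (g (k+2)) = 2" using geodesic_wdist[OF g, of k "k+2"] by simp
    ultimately show False by simp
  qed
  then obtain b where "g (k+1+1) = g (k+1) @ [b]" using geodesic_step[OF g, of "k+1"] by auto
  then show ?thesis by (simp add: add.assoc)
qed

lemma geodesic_length_add:
  assumes g: "geodesic g" and h: "length (g (m+1)) = Suc (length (g m))"
  shows "length (g (m + int d)) = length (g m) + d"
proof -
  have "length (g (m + int d + 1)) = Suc (length (g (m + int d)))" for d
  proof (induction d)
    case 0 then show ?case using h by simp
  next
    case (Suc d)
    define e where "e = m + int d"
    have IH: "length (g (e + 1)) = Suc (length (g e))" using Suc unfolding e_def .
    have st: "length (g (e + 2)) = Suc (length (g (e + 1)))" by (rule geodesic_length_Suc_step[OF g IH])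
    have q1: "m + int (Suc d) + 1 = e + 2" and q2: "m + int (Suc d) = e + 1" unfolding e_def by simp_all
    show ?case unfolding q2 using st by (simp add: add.assoc)
  qed
  note st = this
  show ?thesis
  proof (induction d)
    case (Suc d)
    have q: "m + int (Suc d) = m + int d + 1" by simp
    show ?case unfolding q using Suc.IH st[of d] by simp
  qed simp
qed

lemma geodesic_length_abs:
  assumes g: "geodesic g" and h1: "length (g (m+1)) = Suc (length (g m))"
    and h2: "length (g (m - 1)) = Suc (length (g m))"
  shows "length (g k) = length (g m) + nat \<bar>k - m\<bar>"
proof (cases "k \<ge> m")
  case True
  then obtain d where "k = m + int d" by (metis zle_iff_zadd)
  then show ?thesis using geodesic_length_add[OF g h1, of d] by simp
next
  case False
  let ?g = "\<lambda>i. g (- i)"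
  have g': "geodesic ?g" by (rule geodesic_reflect[OF g])
  have h2': "length (?g (-m + 1)) = Suc (length (?g (-m)))" using h2 by simp
  define d where "d = nat (m - k)"
  have kd: "k = m - int d" using False unfolding d_def by simp
  have e: "- (- m + int d) = k" using kd by simp
  have "length (?g (-m + int d)) = length (?g (-m)) + d" by (rule geodesic_length_add[OF g' h2'])
  then have "length (g k) = length (g m) + d" using e by simp
  moreover have "nat \<bar>k - m\<bar> = d" using kd by simp
  ultimately show ?thesis by simp
qed

lemma geodesic_middle:
  assumes g: "geodesic g" and i: "g i = c @ [a]" and j: "g (i+2) = c @ [b]" and ab: "a \<noteq> b"
  shows "g (i+1) = c"
proof -
  have d1: "wdist (g (i+1)) (g i) = 1" using geodesic_wdist[OF g] by simp
  have d2: "wdist (g (i+1)) (g (i+2)) = 1" using geodesic_wdist[OF g] by simp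
  from wdist_eq_1D[OF d1] show ?thesis
  proof
    assume "\<exists>e. g i = g (i+1) @ [e]"
    then show ?thesis using i by auto
  next
    assume "\<exists>e. g (i+1) = g i @ [e]"
    then obtain e where e: "g (i+1) = c @ [a, e]" using i by auto
    from wdist_eq_1D[OF d2] show ?thesis
    proof
      assume "\<exists>e'. g (i+2) = g (i+1) @ [e']" then show ?thesis using e j by auto
    next
      assume "\<exists>e'. g (i+1) = g (i+2) @ [e']" then show ?thesis using e j ab by auto
    qed
  qed
qed

text \<open>For \<open>c \<noteq> []\<close> these are the lines whose vertex closest to the root is \<open>c\<close>.\<close>

definition lines_topped_at :: "nat list \<Rightarrow> nat list set set" where
  "lines_topped_at c = {l \<in> tlines. c @ [0] \<in> l \<and> c @ [1] \<in> l}"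

lemma lines_topped_at_lowest:
  assumes l: "l \<in> lines_topped_at c"
  shows "c \<in> l \<and> (\<forall>v\<in>l. length c \<le> length v \<and> (length v = length c \<longrightarrow> v = c))"
proof -
  obtain g where g: "geodesic g" "l = range g" using l unfolding lines_topped_at_def tlines_iff_geodesic by auto
  obtain i j where ij: "g i = c @ [0]" "g j = c @ [1]" using l g unfolding lines_topped_at_def by auto
  have "wdist (g i) (g j) = 2" using ij wdist_snoc_snoc by simp
  then have "nat \<bar>i - j\<bar> = 2" using geodesic_wdist[OF g(1)] by simp
  then have "j = i + 2 \<or> i = j + 2" by arith
  then obtain m where m: "g m = c" "length (g (m+1)) = Suc (length c)" "length (g (m - 1)) = Suc (length c)"
  proof
    assume j: "j = i + 2"
    have "g (i+1) = c" using geodesic_middle[OF g(1), of i c 0 1] ij j by simp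
    moreover have "i + 1 + 1 = j" "i + 1 - 1 = i" using j by simp_all
    ultimately show ?thesis using that[of "i+1"] ij by simp
  next
    assume i: "i = j + 2"
    have "g (j+1) = c" using geodesic_middle[OF g(1), of j c 1 0] ij i by simp
    moreover have "j + 1 + 1 = i" "j + 1 - 1 = j" using i by simp_all
    ultimately show ?thesis using that[of "j+1"] ij by simp
  qed
  have V: "length (g k) = length c + nat \<bar>k - m\<bar>" for k
    using geodesic_length_abs[OF g(1), of m k] m by simp
  have "c \<in> l" using g m by auto
  moreover have "length c \<le> length v \<and> (length v = length c \<longrightarrow> v = c)" if v: "v \<in> l" for v
  proof -
    obtain k where k: "v = g k" using v g by auto
    show ?thesis using V[of k] k m(1) by (cases "k = m") auto
  qed
  ultimately show ?thesis by blast
qed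

lemma lines_topped_atI:
  assumes l: "l \<in> tlines" and c: "c \<in> l" "c \<noteq> []" and nb: "butlast c \<notin> l"
  shows "l \<in> lines_topped_at c"
proof -
  obtain g where g: "geodesic g" "l = range g" using l unfolding tlines_iff_geodesic by auto
  obtain i where i: "g i = c" using c g by auto
  have child: "\<exists>a. a < 2 \<and> g k = c @ [a]" if "wdist c (g k) = 1" for k
  proof -
    from wdist_eq_1D[OF that] show ?thesis
    proof
      assume "\<exists>a. c = g k @ [a]"
      then have "g k = butlast c" by (metis butlast_snoc)
      then have False using nb g(2) rangeI[of g k] by simp
      then show ?thesis by blast
    next
      assume "\<exists>a. g k = c @ [a]"
      then obtain a where a: "g k = c @ [a]" by auto
      then have "a < 2" using geodesic_tverts[OF g(1), of k] tverts_snoc_iff[OF c(2)] by simp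
      then show ?thesis using a by auto
    qed
  qed
  have "wdist c (g (i+1)) = 1" using geodesic_wdist[OF g(1), of i "i+1"] i by simp
  then obtain a where a: "a < 2" "g (i+1) = c @ [a]" using child[of "i+1"] by blast
  have "wdist c (g (i-1)) = 1" using geodesic_wdist[OF g(1), of i "i-1"] i by simp
  then obtain b where b: "b < 2" "g (i-1) = c @ [b]" using child[of "i-1"] by blast
  have "wdist (g (i+1)) (g (i - 1)) = 2" using geodesic_wdist[OF g(1)] by simp
  then have "a \<noteq> b" using a(2) b(2) wdist_self by (metis zero_neq_numeral)
  then have ab: "(a = 0 \<and> b = 1) \<or> (a = 1 \<and> b = 0)" using a(1) b(1) by arith
  have la: "c @ [a] \<in> l" using a(2) g(2) rangeI[of g "i+1"] by simp
  have lb: "c @ [b] \<in> l" using b(2) g(2) rangeI[of g "i-1"] by simp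
  have "c @ [0] \<in> l \<and> c @ [1] \<in> l" using ab la lb by blast
  then show ?thesis unfolding lines_topped_at_def using l by blast
qed

section \<open>Surviving vertices\<close>

definition tsphere :: "nat \<Rightarrow> nat list set" where
  "tsphere m = {x \<in> tverts. length x = m}"

definition tball :: "nat \<Rightarrow> nat list set" where
  "tball m = {v \<in> tverts. length v \<le> m}"

definition lines_through :: "nat list \<Rightarrow> nat list set set" where
  "lines_through v = {l \<in> tlines. v \<in> l}"

text \<open>The prefixes of \<open>x\<close> are the vertices of the geodesic segment from the root to \<open>x\<close>.\<close>

definition survivors :: "nat list set set \<Rightarrow> nat \<Rightarrow> nat list set" where
  "survivors P m = {x \<in> tsphere m. \<forall>j\<le>m. \<forall>l\<in>P. take j x \<notin> l}"

lemma tverts_less_3: "x \<in> tverts \<Longrightarrow> set x \<subseteq> {..<3}"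
  unfolding tverts_def by (cases x) auto

lemma finite_tsphere: "finite (tsphere m)"
proof (rule finite_subset)
  show "tsphere m \<subseteq> {xs. set xs \<subseteq> {..<3} \<and> length xs = m}"
    unfolding tsphere_def using tverts_less_3 by blast
qed (rule finite_lists_length_eq, simp)

lemma finite_tball: "finite (tball m)"
proof (rule finite_subset)
  show "tball m \<subseteq> (\<Union>i\<le>m. tsphere i)" unfolding tball_def tsphere_def by blast
qed (use finite_tsphere in blast)

lemma finite_survivors: "finite (survivors P m)"
  unfolding survivors_def using finite_tsphere by simp

lemma survivors_subset: "survivors P m \<subseteq> tsphere m"
  unfolding survivors_def by blast

lemma disjoint_tsegment_root_iff:
  assumes "x \<in> tverts"
  shows "l \<inter> tsegment troot x = {} \<longleftrightarrow> (\<forall>j\<le>length x. take j x \<notin> l)"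
  unfolding tsegment_root[OF assms] by blast

lemma Zcount_eq_card_survivors: "Zcount P m = card (survivors P m)"
proof -
  have "{x \<in> tverts. tdist troot x = m \<and> (\<forall>l\<in>P. l \<inter> tsegment troot x = {})} = survivors P m"
  proof (rule set_eqI)
    fix x
    show "x \<in> {x \<in> tverts. tdist troot x = m \<and> (\<forall>l\<in>P. l \<inter> tsegment troot x = {})} \<longleftrightarrow>
          x \<in> survivors P m"
    proof (cases "x \<in> tverts")
      case True
      then show ?thesis
        unfolding survivors_def tsphere_def using tdist_root disjoint_tsegment_root_iff by auto
    qed (simp add: survivors_def tsphere_def)
  qed
  then show ?thesis unfolding Zcount_def by simp
qed

lemma snoc_in_line_iff:
  assumes "l \<in> tlines" "x \<notin> l"
  shows "x @ [a] \<in> l \<longleftrightarrow> l \<in> lines_topped_at (x @ [a])"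
  using assms lines_topped_atI[of l "x @ [a]"] lines_topped_at_lowest[of l "x @ [a]"] by auto

lemma snoc_survivors_iff:
  assumes x: "x \<in> tsphere n" and n: "n \<ge> 1" and a: "a < 2" and P: "P \<subseteq> tlines"
  shows "x @ [a] \<in> survivors P (Suc n) \<longleftrightarrow>
         x \<in> survivors P n \<and> P \<inter> lines_topped_at (x @ [a]) = {}"
proof -
  have lx: "length x = n" using x unfolding tsphere_def by auto
  then have "x \<noteq> []" using n by auto
  then have "x @ [a] \<in> tsphere (Suc n)"
    using x a tverts_snoc unfolding tsphere_def by (auto simp: lx)
  then have child: "x @ [a] \<in> survivors P (Suc n) \<longleftrightarrow> (\<forall>j\<le>Suc n. \<forall>l\<in>P. take j (x @ [a]) \<notin> l)"
    unfolding survivors_def by blast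
  have parent: "x \<in> survivors P n \<longleftrightarrow> (\<forall>j\<le>n. \<forall>l\<in>P. take j x \<notin> l)"
    using x unfolding survivors_def by blast
  have prefixes: "(\<forall>j\<le>Suc n. \<forall>l\<in>P. take j (x @ [a]) \<notin> l) \<longleftrightarrow>
      (\<forall>j\<le>n. \<forall>l\<in>P. take j x \<notin> l) \<and> (\<forall>l\<in>P. x @ [a] \<notin> l)"
    using lx by (auto simp: le_Suc_eq)
  have "(\<forall>l\<in>P. x @ [a] \<notin> l) \<longleftrightarrow> P \<inter> lines_topped_at (x @ [a]) = {}"
    if avoid: "\<forall>j\<le>n. \<forall>l\<in>P. take j x \<notin> l"
  proof -
    have "x \<notin> l" if "l \<in> P" for l using avoid[rule_format, of n l] that lx by simp
    then show ?thesis using P snoc_in_line_iff[of _ x a] by blast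
  qed
  then show ?thesis unfolding child parent prefixes by blast
qed

lemma tsphere_SucE:
  assumes "c \<in> tsphere (Suc n)" "n \<ge> 1"
  obtains x a where "x \<in> tsphere n" "a < 2" "c = x @ [a]"
proof -
  have c: "c \<in> tverts" "length c = Suc n" using assms(1) unfolding tsphere_def by auto
  then obtain x a where c_eq: "c = x @ [a]" by (metis length_Suc_conv_rev)
  then have lx: "length x = n" using c(2) by simp
  then have "x \<noteq> []" using assms(2) by auto
  then have "x \<in> tverts" "a < 2" using c(1) tverts_snoc_iff unfolding c_eq by blast+
  then show thesis using that c_eq lx unfolding tsphere_def by blast
qed

lemma card_less_2: "card {a::nat. a < 2 \<and> Q a} = of_bool (Q 0) + of_bool (Q 1)"
proof -
  have "{a::nat. a < 2 \<and> Q a} = (if Q 0 then {0} else {}) \<union> (if Q 1 then {1} else {})"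
  proof (rule set_eqI)
    fix a :: nat
    show "a \<in> {a. a < 2 \<and> Q a} \<longleftrightarrow> a \<in> (if Q 0 then {0} else {}) \<union> (if Q 1 then {1} else {})"
      by (cases "a = 0"; cases "a = 1") auto
  qed
  then show ?thesis by (cases "Q 0"; cases "Q 1") auto
qed

text \<open>The number of surviving children of a surviving vertex \<open>x\<close> of depth at least 1.\<close>

definition offspring :: "nat list set set \<Rightarrow> nat list \<Rightarrow> nat" where
  "offspring P x =
     of_bool (P \<inter> lines_topped_at (x @ [0]) = {}) + of_bool (P \<inter> lines_topped_at (x @ [1]) = {})"

lemma Zcount_Suc:
  assumes P: "P \<subseteq> tlines" and n: "n \<ge> 1"
  shows "Zcount P (Suc n) = (\<Sum>x\<in>survivors P n. offspring P x)"
proof -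
  let ?S = "SIGMA x:survivors P n. {a. a < 2 \<and> P \<inter> lines_topped_at (x @ [a]) = {}}"
  have "survivors P (Suc n) = (\<lambda>(x, a). x @ [a]) ` ?S"
  proof (intro set_eqI iffI)
    fix c assume c: "c \<in> survivors P (Suc n)"
    then have "c \<in> tsphere (Suc n)" using survivors_subset by blast
    then obtain x a where x: "x \<in> tsphere n" and a: "a < 2" and c_eq: "c = x @ [a]"
      by (rule tsphere_SucE[OF _ n])
    then have "(x, a) \<in> ?S" using c snoc_survivors_iff[OF x n a P] by simp
    then show "c \<in> (\<lambda>(x, a). x @ [a]) ` ?S" unfolding c_eq by (rule rev_image_eqI) simp
  next
    fix c assume "c \<in> (\<lambda>(x, a). x @ [a]) ` ?S"
    then obtain x a where xa: "(x, a) \<in> ?S" and c_eq: "c = x @ [a]" by auto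
    then have x: "x \<in> tsphere n" and a: "a < 2" using survivors_subset by auto
    show "c \<in> survivors P (Suc n)" using xa unfolding c_eq snoc_survivors_iff[OF x n a P] by simp
  qed
  moreover have "inj_on (\<lambda>(x, a). x @ [a]) ?S" by (rule inj_onI) auto
  ultimately have "Zcount P (Suc n) = card ?S"
    by (simp add: Zcount_eq_card_survivors card_image)
  also have "\<dots> = (\<Sum>x\<in>survivors P n. card {a. a < 2 \<and> P \<inter> lines_topped_at (x @ [a]) = {}})"
    by (rule card_SigmaI) (simp_all add: finite_survivors)
  finally show ?thesis by (simp only: card_less_2 offspring_def)
qed

section \<open>Counting lines\<close>

lemma space_lines_space: "space lines_space = tlines"
  unfolding lines_space_def by (simp add: space_measure_of_conv)

lemma sets_lines_space:
  "sets lines_space = sigma_sets tlines {{l \<in> tlines. x \<in> l} | x. x \<in> tverts}"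
  unfolding lines_space_def by (rule sets_measure_of) auto

lemma sets_lines_space_subset: "A \<in> sets lines_space \<Longrightarrow> A \<subseteq> tlines"
  using sets.sets_into_space[of A lines_space] space_lines_space by simp

lemma lines_through_sets: "v \<in> tverts \<Longrightarrow> lines_through v \<in> sets lines_space"
proof -
  assume v: "v \<in> tverts"
  have "lines_through v \<in> {{l \<in> tlines. x \<in> l} | x. x \<in> tverts}"
    unfolding lines_through_def using v by blast
  then show ?thesis unfolding sets_lines_space by (rule sigma_sets.Basic)
qed

lemma lines_through_subset_ball:
  "v \<in> tverts \<Longrightarrow> length v \<le> n \<Longrightarrow> lines_through v \<subseteq> lines_meeting_ball n"
proof
  fix l assume v: "v \<in> tverts" "length v \<le> n" and l: "l \<in> lines_through v"
  have "tdist troot v \<le> n" using tdist_root[OF v(1)] v(2) by simp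
  then show "l \<in> lines_meeting_ball n"
    using l unfolding lines_through_def lines_meeting_ball_def by blast
qed

lemma lines_topped_at_eq:
  "lines_topped_at c = lines_through (c @ [0]) \<inter> lines_through (c @ [1])"
  unfolding lines_topped_at_def lines_through_def by blast

lemma lines_topped_at_sets:
  "c \<in> tverts \<Longrightarrow> c \<noteq> [] \<Longrightarrow> lines_topped_at c \<in> sets lines_space"
proof -
  assume c: "c \<in> tverts" "c \<noteq> []"
  have "c @ [0] \<in> tverts" "c @ [1] \<in> tverts" using tverts_snoc[OF c] by simp_all
  then show ?thesis unfolding lines_topped_at_eq using lines_through_sets by blast
qed

lemma lines_topped_at_disjoint_ball:
  "length c = Suc n \<Longrightarrow> lines_topped_at c \<inter> lines_meeting_ball n = {}"
proof (rule equals0I)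
  fix l assume c: "length c = Suc n" and "l \<in> lines_topped_at c \<inter> lines_meeting_ball n"
  then have l: "l \<in> lines_topped_at c" "l \<in> lines_meeting_ball n" by auto
  then obtain x where x: "x \<in> l" "tdist troot x \<le> n" unfolding lines_meeting_ball_def by blast
  have "l \<in> tlines" using l(1) unfolding lines_topped_at_def by blast
  then obtain g where g: "geodesic g" "l = range g" unfolding tlines_iff_geodesic by blast
  have xt: "x \<in> tverts" using g x geodesic_tverts by blast
  have "length c \<le> length x" using lines_topped_at_lowest[OF l(1)] x(1) by blast
  then show False using x(2) tdist_root[OF xt] c by simp
qed

lemma lines_topped_at_disjoint:
  "length c = length c' \<Longrightarrow> c \<noteq> c' \<Longrightarrow> lines_topped_at c \<inter> lines_topped_at c' = {}"
proof (rule equals0I)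
  fix l assume e: "length c = length c'" "c \<noteq> c'" and "l \<in> lines_topped_at c \<inter> lines_topped_at c'"
  then have l: "l \<in> lines_topped_at c" "l \<in> lines_topped_at c'" by auto
  have "c' \<in> l" using lines_topped_at_lowest[OF l(2)] by (rule conjunct1)
  then have "length c' = length c \<longrightarrow> c' = c" using lines_topped_at_lowest[OF l(1)] by blast
  then show False using e by simp
qed

definition offspring_lines :: "nat list set \<Rightarrow> nat list set set" where
  "offspring_lines T = (\<Union>x\<in>T. lines_topped_at (x @ [0]) \<union> lines_topped_at (x @ [1]))"

lemma offspring_lines_disjoint:
  assumes y: "y \<in> tsphere n" and T: "T \<subseteq> tsphere n" "y \<notin> T"
  shows "(lines_meeting_ball n \<union> offspring_lines T) \<inter> offspring_lines {y} = {}"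
proof -
  have ly: "length (y @ [a]) = Suc n" for a using y unfolding tsphere_def by simp
  have "lines_topped_at (x @ [b]) \<inter> lines_topped_at (y @ [a]) = {}" if "x \<in> T" for x a b
    using that T ly by (intro lines_topped_at_disjoint) (auto simp: tsphere_def)
  then show ?thesis
    using lines_topped_at_disjoint_ball[OF ly] unfolding offspring_lines_def by blast
qed

lemma ncount_eq_0_iff: "ncount S A = 0 \<longleftrightarrow> S \<inter> A = {}"
  unfolding ncount_def by (auto simp: zero_enat_def)

lemma ncount_empty [simp]: "ncount S {} = 0"
  unfolding ncount_def by (simp add: zero_enat_def)

lemma ncount_Un: "A \<inter> B = {} \<Longrightarrow> ncount S (A \<union> B) = ncount S A + ncount S B"
proof -
  assume AB: "A \<inter> B = {}"
  have eq: "S \<inter> (A \<union> B) = (S \<inter> A) \<union> (S \<inter> B)" by auto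
  show ?thesis
  proof (cases "finite (S \<inter> A) \<and> finite (S \<inter> B)")
    case True
    moreover have "(S \<inter> A) \<inter> (S \<inter> B) = {}" using AB by auto
    ultimately show ?thesis unfolding ncount_def eq by (simp add: card_Un_disjoint)
  qed (auto simp: ncount_def eq)
qed

lemma ncount_UN:
  assumes "finite I" "disjoint_family_on A I"
  shows "ncount S (\<Union>i\<in>I. A i) = (\<Sum>i\<in>I. ncount S (A i))"
  using assms
proof (induction I rule: finite_induct)
  case (insert x F)
  have "A x \<inter> (\<Union>i\<in>F. A i) = {}"
    using insert.prems insert.hyps unfolding disjoint_family_on_def by auto
  moreover have "disjoint_family_on A F" using insert.prems disjoint_family_on_mono by blast
  ultimately show ?case using insert.hyps insert.IH by (simp add: ncount_Un)
qed simp

text \<open>The atoms of a family \<open>A 0, \<dots>, A (k - 1)\<close> of sets of lines: the cells of the partition it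
  generates, labelled with their lists of membership bits.\<close>

definition atom :: "(nat \<Rightarrow> nat list set set) \<Rightarrow> nat \<Rightarrow> bool list \<Rightarrow> nat list set set" where
  "atom A k bl = {l \<in> tlines. \<forall>i<k. (l \<in> A i) = bl ! i}"

definition atom_labels :: "nat \<Rightarrow> bool list set" where
  "atom_labels k = {bl. length bl = k \<and> True \<in> set bl}"

lemma finite_atom_labels: "finite (atom_labels k)"
proof (rule finite_subset)
  show "atom_labels k \<subseteq> {xs. set xs \<subseteq> UNIV \<and> length xs = k}" unfolding atom_labels_def by auto
qed (rule finite_lists_length_eq, simp)

lemma atom_subset: "bl \<in> atom_labels k \<Longrightarrow> \<forall>i<k. A i \<subseteq> R \<Longrightarrow> atom A k bl \<subseteq> R"
  unfolding atom_labels_def atom_def by (auto simp: in_set_conv_nth)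

lemma atom_disjoint:
  "length bl = k \<Longrightarrow> length bl' = k \<Longrightarrow> bl \<noteq> bl' \<Longrightarrow> atom A k bl \<inter> atom A k bl' = {}"
  unfolding atom_def by (auto simp: list_eq_iff_nth_eq)

lemma disjoint_family_on_atom: "disjoint_family_on (atom A k) (atom_labels k)"
  unfolding disjoint_family_on_def atom_labels_def using atom_disjoint by blast

lemma UN_atom:
  assumes "i < k" "\<forall>j<k. A j \<subseteq> tlines"
  shows "A i = (\<Union>bl\<in>{bl \<in> atom_labels k. bl ! i}. atom A k bl)"
proof
  show "A i \<subseteq> (\<Union>bl\<in>{bl \<in> atom_labels k. bl ! i}. atom A k bl)"
  proof
    fix l assume l: "l \<in> A i"
    define bl where "bl = map (\<lambda>j. l \<in> A j) [0..<k]"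
    have len: "length bl = k" and nth: "\<And>j. j < k \<Longrightarrow> bl ! j = (l \<in> A j)"
      unfolding bl_def by simp_all
    then have "bl ! i" "True \<in> set bl" using l assms(1) nth_mem[of i bl] by auto
    moreover have "l \<in> atom A k bl" unfolding atom_def using nth l assms by blast
    ultimately show "l \<in> (\<Union>bl\<in>{bl \<in> atom_labels k. bl ! i}. atom A k bl)"
      using len unfolding atom_labels_def by blast
  qed
qed (use assms in \<open>auto simp: atom_def\<close>)

lemma ncount_eq_sum_atom:
  assumes "i < k" "\<forall>j<k. A j \<subseteq> tlines"
  shows "ncount S (A i) = (\<Sum>bl\<in>{bl \<in> atom_labels k. bl ! i}. ncount S (atom A k bl))"
proof -
  have "finite {bl \<in> atom_labels k. bl ! i}" using finite_atom_labels by simp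
  moreover have "disjoint_family_on (atom A k) {bl \<in> atom_labels k. bl ! i}"
    using disjoint_family_on_atom by (rule disjoint_family_on_mono[rotated]) blast
  ultimately show ?thesis by (subst UN_atom[OF assms]) (rule ncount_UN)
qed

lemma sets_atom:
  assumes "\<forall>i<k. A i \<in> sets lines_space"
  shows "atom A k bl \<in> sets lines_space"
proof -
  have cell: "{l \<in> space lines_space. (l \<in> A i) = bl ! i} \<in> sets lines_space" if i: "i \<in> {..<k}" for i
  proof -
    have Ai: "A i \<in> sets lines_space" using assms i by simp
    show ?thesis
    proof (cases "bl ! i")
      case True
      then have "{l \<in> space lines_space. (l \<in> A i) = bl ! i} = A i"
        using sets_lines_space_subset[OF Ai] space_lines_space by auto
      then show ?thesis using Ai by simp
    next
      case False
      then have "{l \<in> space lines_space. (l \<in> A i) = bl ! i} = space lines_space - A i" by auto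
      then show ?thesis using sets.compl_sets[OF Ai] by simp
    qed
  qed
  have "{l \<in> space lines_space. \<forall>i\<in>{..<k}. (l \<in> A i) = bl ! i} \<in> sets lines_space"
    by (rule sets.sets_Collect_finite_All[OF cell]) simp_all
  moreover have "atom A k bl = {l \<in> space lines_space. \<forall>i\<in>{..<k}. (l \<in> A i) = bl ! i}"
    unfolding atom_def space_lines_space lessThan_iff by blast
  ultimately show ?thesis by simp
qed

lemma disjoint_family_on_atoms_of_disjoint_regions:
  assumes R: "R1 \<inter> R2 = {}" and A1: "\<forall>i<k1. A1 i \<subseteq> R1" and A2: "\<forall>i<k2. A2 i \<subseteq> R2"
  shows "disjoint_family_on (case_sum (atom A1 k1) (atom A2 k2))
           (Inl ` atom_labels k1 \<union> Inr ` atom_labels k2)"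
  unfolding disjoint_family_on_def
proof (intro ballI impI)
  fix i j assume ij: "i \<in> Inl ` atom_labels k1 \<union> Inr ` atom_labels k2"
    "j \<in> Inl ` atom_labels k1 \<union> Inr ` atom_labels k2" "i \<noteq> j"
  have cross: "atom A1 k1 a \<inter> atom A2 k2 b = {}" "atom A2 k2 b \<inter> atom A1 k1 a = {}"
    if "a \<in> atom_labels k1" "b \<in> atom_labels k2" for a b
    using atom_subset[OF that(1) A1] atom_subset[OF that(2) A2] R by blast+
  from ij(1,2) show "case_sum (atom A1 k1) (atom A2 k2) i \<inter> case_sum (atom A1 k1) (atom A2 k2) j = {}"
    using ij(3)
    by (elim UnE imageE; simp add: cross disjoint_family_onD[OF disjoint_family_on_atom])
qed

text \<open>The restriction of the configuration to a region \<open>R\<close> of lines: \<open>region_sigma\<close> is the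
  \<sigma>-algebra it generates (\<open>Fn M PP n\<close> is the case of the lines meeting the \<open>n\<close>-ball), and
  \<open>region_cylinders\<close> is the intersection-stable generator made of the events fixing the counts
  in finitely many measurable subsets of \<open>R\<close>.\<close>

definition region_sigma :: "'w measure \<Rightarrow> ('w \<Rightarrow> nat list set set) \<Rightarrow> nat list set set \<Rightarrow> 'w measure"
  where "region_sigma M PP R = sigma (space M)
     {(\<lambda>\<omega>. ncount (PP \<omega>) A) -` B \<inter> space M | A B. A \<in> sets lines_space \<and> A \<subseteq> R}"

definition region_cylinders :: "'w measure \<Rightarrow> ('w \<Rightarrow> nat list set set) \<Rightarrow> nat list set set \<Rightarrow> 'w set set"
  where "region_cylinders M PP R =
     {{\<omega> \<in> space M. \<forall>i<(k::nat). ncount (PP \<omega>) (A i) \<in> B i} | k A B.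
        \<forall>i<k. A i \<in> sets lines_space \<and> A i \<subseteq> R}"

lemma Fn_eq_region_sigma: "Fn M PP n = region_sigma M PP (lines_meeting_ball n)"
  unfolding Fn_def region_sigma_def ..

lemma space_region_sigma [simp]: "space (region_sigma M PP R) = space M"
  unfolding region_sigma_def by (simp add: space_measure_of_conv)

lemma sets_region_sigma: "sets (region_sigma M PP R) = sigma_sets (space M)
     {(\<lambda>\<omega>. ncount (PP \<omega>) A) -` B \<inter> space M | A B. A \<in> sets lines_space \<and> A \<subseteq> R}"
  unfolding region_sigma_def by (rule sets_measure_of) blast

lemma sets_region_sigma_mono:
  "R1 \<subseteq> R2 \<Longrightarrow> sets (region_sigma M PP R1) \<subseteq> sets (region_sigma M PP R2)"
  unfolding sets_region_sigma by (rule sigma_sets_subseteq) blast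

lemma measurable_ncount_region_sigma:
  assumes "A \<in> sets lines_space" "A \<subseteq> R"
  shows "(\<lambda>\<omega>. ncount (PP \<omega>) A) \<in> measurable (region_sigma M PP R) (count_space UNIV)"
proof (rule measurableI)
  fix B :: "enat set"
  have "(\<lambda>\<omega>. ncount (PP \<omega>) A) -` B \<inter> space M \<in> sets (region_sigma M PP R)"
    unfolding sets_region_sigma using assms by (intro sigma_sets.Basic) blast
  then show "(\<lambda>\<omega>. ncount (PP \<omega>) A) -` B \<inter> space (region_sigma M PP R) \<in> sets (region_sigma M PP R)"
    by simp
qed simp

lemma measurable_counts_region_sigma:
  fixes D :: "'j \<Rightarrow> nat list set set" and h :: "('j \<Rightarrow> enat) \<Rightarrow> 'b"
  assumes J: "finite J" and D: "\<And>j. j \<in> J \<Longrightarrow> D j \<in> sets lines_space \<and> D j \<subseteq> R"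
  shows "(\<lambda>\<omega>. h (restrict (\<lambda>j. ncount (PP \<omega>) (D j)) J)) \<in> measurable (region_sigma M PP R) (count_space UNIV)"
proof -
  have "(\<lambda>\<omega>. restrict (\<lambda>j. ncount (PP \<omega>) (D j)) J)
          \<in> measurable (region_sigma M PP R) (PiM J (\<lambda>_. count_space UNIV))"
    using D by (intro measurable_restrict measurable_ncount_region_sigma) auto
  moreover have "PiM J (\<lambda>_. count_space (UNIV :: enat set)) = count_space (PiE J (\<lambda>_. UNIV))"
    using J by (intro count_space_PiM_finite) simp_all
  ultimately show ?thesis by (simp add: measurable_compose[where g = h])
qed

lemma region_sigma_Collect:
  "g \<in> measurable (region_sigma M PP R) (count_space UNIV) \<Longrightarrow>
   {\<omega> \<in> space M. g \<omega> \<in> B} \<in> sets (region_sigma M PP R)"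
  using measurable_Collect_mem[of g "region_sigma M PP R" "count_space UNIV" B] by simp

lemma region_cylindersE:
  assumes "C \<in> region_cylinders M PP R"
  obtains k A B where "C = {\<omega> \<in> space M. \<forall>i<(k::nat). ncount (PP \<omega>) (A i) \<in> B i}"
    "\<forall>i<k. A i \<in> sets lines_space \<and> A i \<subseteq> R"
  using assms unfolding region_cylinders_def by blast

lemma region_cylindersI:
  "\<forall>i<k. A i \<in> sets lines_space \<and> A i \<subseteq> R \<Longrightarrow>
   {\<omega> \<in> space M. \<forall>i<(k::nat). ncount (PP \<omega>) (A i) \<in> B i} \<in> region_cylinders M PP R"
  unfolding region_cylinders_def by blast

lemma Int_stable_region_cylinders: "Int_stable (region_cylinders M PP R)"
  unfolding Int_stable_def
proof (intro ballI)
  fix C1 C2 assume "C1 \<in> region_cylinders M PP R" "C2 \<in> region_cylinders M PP R"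
  then obtain k1 A1 B1 k2 A2 B2
    where C1: "C1 = {\<omega> \<in> space M. \<forall>i<(k1::nat). ncount (PP \<omega>) (A1 i) \<in> B1 i}"
      and A1: "\<forall>i<k1. A1 i \<in> sets lines_space \<and> A1 i \<subseteq> R"
      and C2: "C2 = {\<omega> \<in> space M. \<forall>i<(k2::nat). ncount (PP \<omega>) (A2 i) \<in> B2 i}"
      and A2: "\<forall>i<k2. A2 i \<in> sets lines_space \<and> A2 i \<subseteq> R"
    by (elim region_cylindersE)
  define A where "A i = (if i < k1 then A1 i else A2 (i - k1))" for i
  define B where "B i = (if i < k1 then B1 i else B2 (i - k1))" for i
  have "(\<forall>i<k1 + k2. P i) \<longleftrightarrow> (\<forall>i<k1. P i) \<and> (\<forall>i<k2. P (k1 + i))" for P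
    by (metis add_less_cancel_left le_add_diff_inverse not_less trans_less_add1)
  then have "C1 \<inter> C2 = {\<omega> \<in> space M. \<forall>i<k1 + k2. ncount (PP \<omega>) (A i) \<in> B i}"
    unfolding C1 C2 A_def B_def by auto
  moreover have "\<forall>i<k1 + k2. A i \<in> sets lines_space \<and> A i \<subseteq> R"
    using A1 A2 unfolding A_def by auto
  ultimately show "C1 \<inter> C2 \<in> region_cylinders M PP R" by (simp add: region_cylindersI)
qed

lemma sets_region_sigma_subset_cylinders:
  "sets (region_sigma M PP R) \<subseteq> sigma_sets (space M) (region_cylinders M PP R)"
  unfolding sets_region_sigma
proof (rule sigma_sets_subseteq, safe)
  fix A B assume "A \<in> sets lines_space" "A \<subseteq> R"
  then have "{\<omega> \<in> space M. \<forall>i<(1::nat). ncount (PP \<omega>) A \<in> B} \<in> region_cylinders M PP R"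
    by (intro region_cylindersI) simp
  moreover have "{\<omega> \<in> space M. \<forall>i<(1::nat). ncount (PP \<omega>) A \<in> B} = (\<lambda>\<omega>. ncount (PP \<omega>) A) -` B \<inter> space M"
    by blast
  ultimately show "(\<lambda>\<omega>. ncount (PP \<omega>) A) -` B \<inter> space M \<in> region_cylinders M PP R" by simp
qed

section \<open>The Poisson process of lines\<close>

locale line_poisson_process =
  fixes M :: "'w measure" and \<mu> :: "nat list set measure"
    and PP :: "'w \<Rightarrow> nat list set set" and \<alpha> :: real
  assumes alpha_pos: "\<alpha> > 0" and line_measure: "is_line_measure \<mu>"
    and poisson: "poisson_process M (scale_measure (ennreal \<alpha>) \<mu>) PP"
begin

abbreviation \<nu> :: "nat list set measure" where
  "\<nu> \<equiv> scale_measure (ennreal \<alpha>) \<mu>"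

sublocale prob_space M
  using poisson unfolding poisson_process_def by blast

lemma sets_nu: "sets \<nu> = sets lines_space"
  using line_measure unfolding is_line_measure_def by simp

lemma PP_subset_tlines:
  assumes "\<omega> \<in> space M"
  shows "PP \<omega> \<subseteq> tlines"
proof -
  have "PP \<omega> \<subseteq> space \<nu>" using poisson assms unfolding poisson_process_def by blast
  then show ?thesis using sets_eq_imp_space_eq[OF sets_nu] space_lines_space by simp
qed

lemma measurable_ncount:
  assumes "A \<in> sets lines_space"
  shows "(\<lambda>\<omega>. ncount (PP \<omega>) A) \<in> measurable M (count_space UNIV)"
proof -
  have "\<forall>A\<in>sets \<nu>. (\<lambda>\<omega>. ncount (PP \<omega>) A) \<in> measurable M (count_space UNIV)"
    using poisson unfolding poisson_process_def by blast
  then show ?thesis using assms sets_nu by blast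
qed

lemma ncount_event: "A \<in> sets lines_space \<Longrightarrow> {\<omega> \<in> space M. ncount (PP \<omega>) A \<in> B} \<in> events"
  by (rule measurable_Collect_mem[OF measurable_ncount]) simp_all

lemma prob_ncount_eq_0:
  assumes "A \<in> sets lines_space" "emeasure \<nu> A < \<infinity>"
  shows "prob {\<omega> \<in> space M. ncount (PP \<omega>) A = 0} = exp (- enn2real (emeasure \<nu> A))"
proof -
  have "\<forall>A\<in>sets \<nu>. emeasure \<nu> A < \<infinity> \<longrightarrow> (\<forall>k::nat.
          prob {\<omega> \<in> space M. ncount (PP \<omega>) A = enat k} =
          enn2real (emeasure \<nu> A) ^ k / fact k * exp (- enn2real (emeasure \<nu> A)))"
    using poisson unfolding poisson_process_def by blast
  moreover have "A \<in> sets \<nu>" using assms(1) sets_nu by simp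
  ultimately show ?thesis using assms(2) by (auto simp: zero_enat_def dest!: bspec spec[of _ 0])
qed

text \<open>\<open>poisson_process\<close> only speaks of families indexed by sets of naturals; any countable
  index type is reduced to that case via \<open>to_nat\<close>.\<close>

lemma indep_vars_ncount:
  fixes D :: "'i::countable \<Rightarrow> nat list set set"
  assumes I: "finite I" and D: "\<And>i. i \<in> I \<Longrightarrow> D i \<in> sets lines_space"
    and disj: "disjoint_family_on D I"
  shows "indep_vars (\<lambda>_. count_space UNIV) (\<lambda>i \<omega>. ncount (PP \<omega>) (D i)) I"
proof -
  have "disjoint_family_on (\<lambda>j. D (from_nat j)) (to_nat ` I)"
    using disj unfolding disjoint_family_on_def by auto
  moreover have "\<forall>j\<in>to_nat ` I. D (from_nat j) \<in> sets \<nu>" using D sets_nu by auto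
  moreover have "\<forall>(I :: nat set) A. finite I \<longrightarrow> (\<forall>i\<in>I. A i \<in> sets \<nu>) \<longrightarrow> disjoint_family_on A I \<longrightarrow>
      indep_vars (\<lambda>_. count_space UNIV) (\<lambda>i \<omega>. ncount (PP \<omega>) (A i)) I"
    using poisson unfolding poisson_process_def by (elim conjE) assumption
  ultimately have "indep_vars (\<lambda>_. count_space UNIV) (\<lambda>j \<omega>. ncount (PP \<omega>) (D (from_nat j))) (to_nat ` I)"
    using I by (auto dest: spec[of _ "to_nat ` I"] spec[of _ "\<lambda>j. D (from_nat j)"])
  from indep_vars_reindex[OF inj_on_to_nat this] show ?thesis by simp
qed

lemma region_cylinders_events: "region_cylinders M PP R \<subseteq> events"
proof
  fix C assume "C \<in> region_cylinders M PP R"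
  then obtain k A B where C: "C = {\<omega> \<in> space M. \<forall>i<(k::nat). ncount (PP \<omega>) (A i) \<in> B i}"
    and A: "\<forall>i<k. A i \<in> sets lines_space \<and> A i \<subseteq> R" by (rule region_cylindersE)
  have cell: "{\<omega> \<in> space M. ncount (PP \<omega>) (A i) \<in> B i} \<in> events" if "i \<in> {..<k}" for i
  proof -
    have "A i \<in> sets lines_space" using A that by simp
    then show ?thesis by (rule ncount_event)
  qed
  have "{\<omega> \<in> space M. \<forall>i\<in>{..<k}. ncount (PP \<omega>) (A i) \<in> B i} \<in> events"
    by (rule sets.sets_Collect_finite_All[OF cell]) simp_all
  moreover have "C = {\<omega> \<in> space M. \<forall>i\<in>{..<k}. ncount (PP \<omega>) (A i) \<in> B i}"
    unfolding C lessThan_iff by blast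
  ultimately show "C \<in> events" by simp
qed

lemma sets_region_sigma_subset_events: "sets (region_sigma M PP R) \<subseteq> events"
  using sets_region_sigma_subset_cylinders sets.sigma_sets_subset[OF region_cylinders_events] by blast

lemma subalgebra_region_sigma: "subalgebra M (region_sigma M PP R)"
  unfolding subalgebra_def using sets_region_sigma_subset_events by simp

text \<open>Counts in disjoint regions are independent: the counts in \<open>A1 0, \<dots>\<close> and in \<open>A2 0, \<dots>\<close> are
  sums of counts in the atoms of the two families, and all these atoms are pairwise disjoint.\<close>

lemma prob_cylinders_of_disjoint_regions:
  fixes k1 k2 :: nat
  assumes R: "R1 \<inter> R2 = {}"
    and A1: "\<forall>i<k1. A1 i \<in> sets lines_space \<and> A1 i \<subseteq> R1"
    and A2: "\<forall>i<k2. A2 i \<in> sets lines_space \<and> A2 i \<subseteq> R2"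
  shows "prob ({\<omega> \<in> space M. \<forall>i<k1. ncount (PP \<omega>) (A1 i) \<in> B1 i} \<inter>
               {\<omega> \<in> space M. \<forall>i<k2. ncount (PP \<omega>) (A2 i) \<in> B2 i}) =
         prob {\<omega> \<in> space M. \<forall>i<k1. ncount (PP \<omega>) (A1 i) \<in> B1 i} *
         prob {\<omega> \<in> space M. \<forall>i<k2. ncount (PP \<omega>) (A2 i) \<in> B2 i}"
proof -
  define D where "D = case_sum (atom A1 k1) (atom A2 k2)"
  define J1 :: "(bool list + bool list) set" where "J1 = Inl ` atom_labels k1"
  define J2 :: "(bool list + bool list) set" where "J2 = Inr ` atom_labels k2"
  have J: "finite J1" "finite J2" "J1 \<inter> J2 = {}"
    unfolding J1_def J2_def using finite_atom_labels by auto
  have "disjoint_family_on D (J1 \<union> J2)" unfolding D_def J1_def J2_def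
    using A1 A2 by (intro disjoint_family_on_atoms_of_disjoint_regions[OF R]) auto
  moreover have "D j \<in> sets lines_space" for j
    unfolding D_def using A1 A2 by (cases j) (auto intro: sets_atom)
  ultimately have "indep_vars (\<lambda>_. count_space UNIV) (\<lambda>j \<omega>. ncount (PP \<omega>) (D j)) (J1 \<union> J2)"
    using J by (intro indep_vars_ncount) auto
  define X where "X \<omega> = restrict (\<lambda>j. ncount (PP \<omega>) (D j)) J1" for \<omega>
  define Y where "Y \<omega> = restrict (\<lambda>j. ncount (PP \<omega>) (D j)) J2" for \<omega>
  have XY: "indep_var (PiM J1 (\<lambda>_. count_space UNIV)) X (PiM J2 (\<lambda>_. count_space UNIV)) Y"
    unfolding X_def Y_def by (rule indep_var_restrict[OF \<open>indep_vars _ _ _\<close> J(3)]) auto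
  define S1 where "S1 = {f \<in> PiE J1 (\<lambda>_. UNIV).
    \<forall>i<k1. (\<Sum>bl\<in>{bl \<in> atom_labels k1. bl ! i}. f (Inl bl)) \<in> B1 i}"
  define S2 where "S2 = {f \<in> PiE J2 (\<lambda>_. UNIV).
    \<forall>i<k2. (\<Sum>bl\<in>{bl \<in> atom_labels k2. bl ! i}. f (Inr bl)) \<in> B2 i}"
  have "ncount (PP \<omega>) (A1 i) = (\<Sum>bl\<in>{bl \<in> atom_labels k1. bl ! i}. X \<omega> (Inl bl))" if "i < k1" for i \<omega>
    using ncount_eq_sum_atom[OF that] A1 sets_lines_space_subset
    unfolding X_def D_def J1_def by (auto intro!: sum.cong)
  then have C1: "{\<omega> \<in> space M. \<forall>i<k1. ncount (PP \<omega>) (A1 i) \<in> B1 i} = X -` S1 \<inter> space M"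
    unfolding S1_def X_def by auto
  have "ncount (PP \<omega>) (A2 i) = (\<Sum>bl\<in>{bl \<in> atom_labels k2. bl ! i}. Y \<omega> (Inr bl))" if "i < k2" for i \<omega>
    using ncount_eq_sum_atom[OF that] A2 sets_lines_space_subset
    unfolding Y_def D_def J2_def by (auto intro!: sum.cong)
  then have C2: "{\<omega> \<in> space M. \<forall>i<k2. ncount (PP \<omega>) (A2 i) \<in> B2 i} = Y -` S2 \<inter> space M"
    unfolding S2_def Y_def by auto
  have "S1 \<in> sets (PiM J1 (\<lambda>_. count_space UNIV))" "S2 \<in> sets (PiM J2 (\<lambda>_. count_space UNIV))"
    using J by (simp_all add: count_space_PiM_finite S1_def S2_def)
  moreover have "(X -` S1 \<inter> space M) \<inter> (Y -` S2 \<inter> space M) = (\<lambda>\<omega>. (X \<omega>, Y \<omega>)) -` (S1 \<times> S2) \<inter> space M"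
    by blast
  ultimately show ?thesis unfolding C1 C2 using indep_varD[OF XY] by simp
qed

lemma prob_Int_region_sigma:
  assumes R: "R1 \<inter> R2 = {}"
    and C1: "C1 \<in> sets (region_sigma M PP R1)" and C2: "C2 \<in> sets (region_sigma M PP R2)"
  shows "prob (C1 \<inter> C2) = prob C1 * prob C2"
proof -
  have "indep_set (region_cylinders M PP R1) (region_cylinders M PP R2)"
  proof (rule indep_setI)
    fix C1 C2 assume "C1 \<in> region_cylinders M PP R1" "C2 \<in> region_cylinders M PP R2"
    then show "prob (C1 \<inter> C2) = prob C1 * prob C2"
      by (elim region_cylindersE) (simp add: prob_cylinders_of_disjoint_regions[OF R])
  qed (rule region_cylinders_events)+
  then have "indep_set (sigma_sets (space M) (region_cylinders M PP R1))
                       (sigma_sets (space M) (region_cylinders M PP R2))"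
    by (intro indep_set_sigma_sets Int_stable_region_cylinders)
  then show ?thesis
    using C1 C2 sets_region_sigma_subset_cylinders by (blast intro: indep_setD)
qed

lemma emeasure_lines_topped_at:
  assumes c: "c \<in> tverts" "c \<noteq> []"
  shows "emeasure \<nu> (lines_topped_at c) = ennreal (\<alpha> / 4)"
proof -
  have t: "c @ [0] \<in> tverts" "c @ [1] \<in> tverts" using tverts_snoc[OF c] by simp_all
  have "tdist (c @ [0]) (c @ [1]) = 2" using tdist_eq_wdist[OF t] wdist_snoc_snoc[of c 0 1] by simp
  then have "emeasure \<mu> (lines_topped_at c) = ennreal (1 / 4)"
    using line_measure t unfolding is_line_measure_def lines_topped_at_def
    by (simp add: power2_eq_square)
  then show ?thesis using alpha_pos by (simp add: ennreal_mult[symmetric])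
qed

lemma prob_no_line_topped_at:
  assumes "c \<in> tverts" "c \<noteq> []"
  shows "prob {\<omega> \<in> space M. ncount (PP \<omega>) (lines_topped_at c) = 0} = exp (- \<alpha> / 4)"
proof -
  have finite: "emeasure \<nu> (lines_topped_at c) < \<infinity>"
    unfolding emeasure_lines_topped_at[OF assms] by simp
  have "prob {\<omega> \<in> space M. ncount (PP \<omega>) (lines_topped_at c) = 0} =
        exp (- enn2real (emeasure \<nu> (lines_topped_at c)))"
    by (rule prob_ncount_eq_0[OF lines_topped_at_sets[OF assms] finite])
  also have "\<dots> = exp (- \<alpha> / 4)"
    unfolding emeasure_lines_topped_at[OF assms] using alpha_pos by simp
  finally show ?thesis .
qed

lemma survivors_eq_counts:
  assumes "\<omega> \<in> space M"
  shows "survivors (PP \<omega>) m =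
    (\<lambda>f. {x \<in> tsphere m. \<forall>j\<le>m. f (take j x) = 0}) (restrict (\<lambda>v. ncount (PP \<omega>) (lines_through v)) (tball m))"
proof -
  have "(\<forall>l\<in>PP \<omega>. take j x \<notin> l) \<longleftrightarrow>
        restrict (\<lambda>v. ncount (PP \<omega>) (lines_through v)) (tball m) (take j x) = 0"
    if x: "x \<in> tsphere m" and j: "j \<le> m" for x j
  proof -
    have "take j x \<in> tball m" using x tverts_take unfolding tsphere_def tball_def by simp
    moreover have "ncount (PP \<omega>) (lines_through (take j x)) = 0 \<longleftrightarrow> (\<forall>l\<in>PP \<omega>. take j x \<notin> l)"
      using PP_subset_tlines[OF assms] unfolding ncount_eq_0_iff lines_through_def by blast
    ultimately show ?thesis by simp
  qed
  then show ?thesis unfolding survivors_def by blast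
qed

lemma measurable_survivors:
  assumes "m \<le> n"
  shows "(\<lambda>\<omega>. h (survivors (PP \<omega>) m)) \<in> measurable (Fn M PP n) (count_space UNIV)"
proof -
  have "\<And>v. v \<in> tball m \<Longrightarrow> lines_through v \<in> sets lines_space \<and> lines_through v \<subseteq> lines_meeting_ball n"
    using assms lines_through_sets lines_through_subset_ball unfolding tball_def by auto
  then have "(\<lambda>\<omega>. h ((\<lambda>f. {x \<in> tsphere m. \<forall>j\<le>m. f (take j x) = 0})
                       (restrict (\<lambda>v. ncount (PP \<omega>) (lines_through v)) (tball m))))
             \<in> measurable (Fn M PP n) (count_space UNIV)"
    unfolding Fn_eq_region_sigma by (intro measurable_counts_region_sigma finite_tball)
  then show ?thesis
    by (rule measurable_cong[THEN iffD1, rotated]) (simp add: survivors_eq_counts Fn_eq_region_sigma)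
qed

lemma measurable_Zcount:
  assumes "m \<le> n"
  shows "(\<lambda>\<omega>. Zcount (PP \<omega>) m) \<in> measurable (Fn M PP n) (count_space UNIV)"
  unfolding Zcount_eq_card_survivors by (rule measurable_survivors[OF assms])

lemma Zcount_event: "{\<omega> \<in> space M. Zcount (PP \<omega>) m = k} \<in> events"
proof -
  have "(\<lambda>\<omega>. Zcount (PP \<omega>) m) \<in> measurable M (count_space UNIV)"
    using measurable_Zcount[of m m] subalgebra_region_sigma
    unfolding Fn_eq_region_sigma by (blast intro: measurable_from_subalg)
  from measurable_Collect_mem[OF this, of "{k}"] show ?thesis by simp
qed

lemma measurable_offspring_sum:
  assumes T: "T \<subseteq> tsphere n" and n: "n \<ge> 1"
  shows "(\<lambda>\<omega>. \<Sum>x\<in>T. offspring (PP \<omega>) x) \<in> measurable (region_sigma M PP (offspring_lines T)) (count_space UNIV)"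
proof -
  define J where "J = (\<lambda>(x, a). x @ [a]) ` (T \<times> {0, 1::nat})"
  define h :: "(nat list \<Rightarrow> enat) \<Rightarrow> nat"
    where "h f = (\<Sum>x\<in>T. of_bool (f (x @ [0]) = 0) + of_bool (f (x @ [1]) = 0))" for f
  have "finite T" using finite_subset[OF T finite_tsphere] .
  then have fin: "finite J" unfolding J_def by simp
  have D: "lines_topped_at c \<in> sets lines_space \<and> lines_topped_at c \<subseteq> offspring_lines T"
    if "c \<in> J" for c
  proof -
    from \<open>c \<in> J\<close> obtain p where p: "p \<in> T \<times> {0, 1}" and c: "c = (\<lambda>(x, a). x @ [a]) p"
      unfolding J_def by (rule imageE)
    obtain x a where xa: "p = (x, a)" by (cases p)
    have x: "x \<in> T" and a: "a < 2" and c: "c = x @ [a]" using p c unfolding xa by auto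
    have "x \<in> tverts" "x \<noteq> []" using x T n unfolding tsphere_def by auto
    then have "c \<in> tverts" unfolding c using a by (rule tverts_snoc)
    moreover have "c \<noteq> []" unfolding c by simp
    ultimately have "lines_topped_at c \<in> sets lines_space" by (rule lines_topped_at_sets)
    moreover have "lines_topped_at c \<subseteq> offspring_lines T"
      using x a c unfolding offspring_lines_def by (auto simp: less_2_cases_iff)
    ultimately show ?thesis ..
  qed
  have "(\<lambda>\<omega>. h (restrict (\<lambda>c. ncount (PP \<omega>) (lines_topped_at c)) J))
          \<in> measurable (region_sigma M PP (offspring_lines T)) (count_space UNIV)"
    by (rule measurable_counts_region_sigma[OF fin D])
  moreover have "h (restrict (\<lambda>c. ncount (PP \<omega>) (lines_topped_at c)) J) = (\<Sum>x\<in>T. offspring (PP \<omega>) x)" for \<omega>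
    unfolding h_def offspring_def ncount_eq_0_iff[symmetric]
    by (intro sum.cong) (auto simp: J_def)
  ultimately show ?thesis by simp
qed

lemma offspring_sum_event:
  assumes "T \<subseteq> tsphere n" "n \<ge> 1"
  shows "{\<omega> \<in> space M. (\<Sum>x\<in>T. offspring (PP \<omega>) x) = k} \<in> sets (region_sigma M PP (offspring_lines T))"
  using region_sigma_Collect[OF measurable_offspring_sum[OF assms], of "{k}"] by simp

lemma prob_offspring:
  assumes y: "y \<in> tsphere n" and n: "n \<ge> 1"
  shows "prob {\<omega> \<in> space M. offspring (PP \<omega>) y = j} = pmf (binomial_pmf 2 (exp (- \<alpha> / 4))) j"
proof -
  define E where "E a = {\<omega> \<in> space M. ncount (PP \<omega>) (lines_topped_at (y @ [a])) \<in> {0}}" for a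
  have "y \<in> tverts" "y \<noteq> []" using y n unfolding tsphere_def by auto
  then have c: "y @ [a] \<in> tverts" "y @ [a] \<noteq> []" if "a < 2" for a
    using that by (simp_all add: tverts_snoc)
  have E: "E a \<in> sets (region_sigma M PP (lines_topped_at (y @ [a])))" if "a < 2" for a
  proof -
    have "lines_topped_at (y @ [a]) \<in> sets lines_space" using c[OF that] by (rule lines_topped_at_sets)
    then show ?thesis unfolding E_def by (intro region_sigma_Collect measurable_ncount_region_sigma) simp_all
  qed
  have "E a \<in> events" if "a < 2" for a using E[OF that] sets_region_sigma_subset_events by blast
  moreover have "prob (E a) = exp (- \<alpha> / 4)" if "a < 2" for a
    using prob_no_line_topped_at[OF c[OF that]] unfolding E_def by simp
  moreover have "lines_topped_at (y @ [0]) \<inter> lines_topped_at (y @ [1]) = {}"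
    by (rule lines_topped_at_disjoint) simp_all
  then have "prob (E 0 \<inter> E 1) = prob (E 0) * prob (E 1)"
    using prob_Int_region_sigma[OF _ E[of 0] E[of 1]] by simp
  ultimately have "prob {\<omega> \<in> space M. of_bool (\<omega> \<in> E 0) + of_bool (\<omega> \<in> E 1) = j} =
                   pmf (binomial_pmf 2 (exp (- \<alpha> / 4))) j"
    by (intro prob_count_two_events) simp_all
  moreover have "{\<omega> \<in> space M. offspring (PP \<omega>) y = j} =
                 {\<omega> \<in> space M. of_bool (\<omega> \<in> E 0) + of_bool (\<omega> \<in> E 1) = j}"
    unfolding E_def offspring_def ncount_eq_0_iff[symmetric] by auto
  ultimately show ?thesis by simp
qed

text \<open>The offspring numbers of distinct vertices of depth \<open>n\<close> depend on disjoint sets of lines,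
  which are also disjoint from the lines meeting the \<open>n\<close>-ball.\<close>

lemma prob_Int_offspring_sum:
  assumes n: "n \<ge> 1" and T: "T \<subseteq> tsphere n" and A: "A \<in> sets (Fn M PP n)"
  shows "prob (A \<inter> {\<omega> \<in> space M. (\<Sum>x\<in>T. offspring (PP \<omega>) x) = k}) =
         prob A * pmf (iid_sum_pmf (card T) (binomial_pmf 2 (exp (- \<alpha> / 4)))) k"
proof -
  let ?q = "binomial_pmf 2 (exp (- \<alpha> / 4))"
  let ?L = "lines_meeting_ball n"
  let ?S = "\<lambda>T \<omega>. \<Sum>x\<in>T. offspring (PP \<omega>) x"
  have A': "A \<in> sets (region_sigma M PP ?L)" using A unfolding Fn_eq_region_sigma .
  then have "A \<in> events" using sets_region_sigma_subset_events by blast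
  have "finite T" using finite_subset[OF T finite_tsphere] .
  then show ?thesis
    using T
  proof (induction T arbitrary: k rule: finite_induct)
    case empty
    have "A \<subseteq> space M" using \<open>A \<in> events\<close> by (rule sets.sets_into_space)
    then show ?case by (cases "k = 0") (auto simp: iid_sum_pmf_0 Int_absorb2)
  next
    case (insert y T)
    have y: "y \<in> tsphere n" and T: "T \<subseteq> tsphere n" using insert.prems by auto
    have ST: "{\<omega> \<in> space M. ?S T \<omega> = j} \<in> sets (region_sigma M PP (?L \<union> offspring_lines T))" for j
      using sets_region_sigma_mono[OF Un_upper2] offspring_sum_event[OF T n] by blast
    have AT: "A \<inter> {\<omega> \<in> space M. ?S T \<omega> = j} \<in> sets (region_sigma M PP (?L \<union> offspring_lines T))" for j
      using sets_region_sigma_mono[OF Un_upper1] A' ST by blast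
    have Sy: "{\<omega> \<in> space M. offspring (PP \<omega>) y = j} \<in> sets (region_sigma M PP (offspring_lines {y}))" for j
      using offspring_sum_event[of "{y}" n j] y n by simp
    have "?S (insert y T) \<omega> = offspring (PP \<omega>) y + ?S T \<omega>" for \<omega>
      using insert.hyps by simp
    then have "prob (A \<inter> {\<omega> \<in> space M. ?S (insert y T) \<omega> = k}) =
               prob (A \<inter> {\<omega> \<in> space M. offspring (PP \<omega>) y + ?S T \<omega> = k})"
      by simp
    also have "\<dots> = (\<Sum>j\<le>k. prob ((A \<inter> {\<omega> \<in> space M. ?S T \<omega> = k - j}) \<inter>
                                     {\<omega> \<in> space M. offspring (PP \<omega>) y = j}))"
      using ST Sy sets_region_sigma_subset_events
      by (intro prob_Int_sum_eq[OF \<open>A \<in> events\<close>]) blast+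
    also have "\<dots> = (\<Sum>j\<le>k. prob A * pmf (iid_sum_pmf (card T) ?q) (k - j) * pmf ?q j)"
      using prob_Int_region_sigma[OF offspring_lines_disjoint[OF y T insert.hyps(2)] AT Sy]
        insert.IH[OF T] prob_offspring[OF y n] by simp
    also have "\<dots> = prob A * pmf (iid_sum_pmf (card (insert y T)) ?q) k"
      using insert.hyps by (simp add: pmf_iid_sum_pmf_Suc sum_distrib_left mult_ac)
    finally show ?case .
  qed
qed

lemma cond_iid_sum_Fn:
  assumes n: "n \<ge> 1"
  shows "cond_iid_sum M (Fn M PP n) (\<lambda>\<omega>. Zcount (PP \<omega>) (Suc n)) (\<lambda>\<omega>. Zcount (PP \<omega>) n)
           (binomial_pmf 2 (exp (- \<alpha> / 4)))"
  unfolding cond_iid_sum_def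
proof
  fix k
  let ?q = "binomial_pmf 2 (exp (- \<alpha> / 4))"
  let ?E = "{\<omega> \<in> space M. Zcount (PP \<omega>) (Suc n) = k}"
  let ?S = "\<lambda>\<omega>. survivors (PP \<omega>) n"
  have FM: "sets (Fn M PP n) \<subseteq> events"
    unfolding Fn_eq_region_sigma by (rule sets_region_sigma_subset_events)
  have S: "{\<omega> \<in> space M. ?S \<omega> = T} \<in> sets (Fn M PP n)" for T
    using measurable_survivors[of n n id] region_sigma_Collect[of _ M PP _ "{T}"]
    unfolding Fn_eq_region_sigma by simp
  show "AE \<omega> in M. real_cond_exp M (Fn M PP n) (indicator ?E) \<omega> = pmf (iid_sum_pmf (Zcount (PP \<omega>) n) ?q) k"
  proof (rule real_cond_exp_indicator_eqI)
    show "(\<lambda>\<omega>. pmf (iid_sum_pmf (Zcount (PP \<omega>) n) ?q) k) \<in> borel_measurable (Fn M PP n)"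
      using measurable_Zcount[of n n] by measurable
    fix A assume A: "A \<in> sets (Fn M PP n)"
    have "prob (A \<inter> ?E) = (\<integral>\<omega>. indicator A \<omega> * pmf (iid_sum_pmf (card (?S \<omega>)) ?q) k \<partial>M)"
    proof (rule prob_Int_eq_integral_partition[where P = "Pow (tsphere n)"])
      fix T assume "T \<in> Pow (tsphere n)"
      moreover have "A \<inter> {\<omega> \<in> space M. ?S \<omega> = T} \<inter> ?E =
          A \<inter> {\<omega> \<in> space M. ?S \<omega> = T} \<inter> {\<omega> \<in> space M. (\<Sum>x\<in>T. offspring (PP \<omega>) x) = k}"
        using Zcount_Suc[OF PP_subset_tlines n] by auto
      ultimately show "prob (A \<inter> {\<omega> \<in> space M. ?S \<omega> = T} \<inter> ?E) =
          prob (A \<inter> {\<omega> \<in> space M. ?S \<omega> = T}) * pmf (iid_sum_pmf (card T) ?q) k"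
        using prob_Int_offspring_sum[OF n, of T "A \<inter> _"] A S by auto
    qed (use A S FM finite_tsphere survivors_subset Zcount_event in auto)
    then show "prob (A \<inter> ?E) = (\<integral>\<omega>. indicator A \<omega> * pmf (iid_sum_pmf (Zcount (PP \<omega>) n) ?q) k \<partial>M)"
      by (simp add: Zcount_eq_card_survivors)
  qed (use Zcount_event pmf_le_1 in \<open>simp_all add: Fn_eq_region_sigma subalgebra_region_sigma\<close>)
qed

lemma subalgebra_Fn_hist: "subalgebra (Fn M PP n) (hist M (\<lambda>n \<omega>. Zcount (PP \<omega>) n) n)"
proof -
  let ?G = "{(\<lambda>\<omega>. Zcount (PP \<omega>) i) -` B \<inter> space M | i B. 1 \<le> i \<and> i \<le> n}"
  have "?G \<subseteq> sets (Fn M PP n)"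
    using measurable_sets[OF measurable_Zcount] by (auto simp: Fn_eq_region_sigma)
  then have "sigma_sets (space M) ?G \<subseteq> sets (Fn M PP n)"
    using sets.sigma_sets_subset[of ?G "Fn M PP n"] by (simp add: Fn_eq_region_sigma)
  then show ?thesis
    unfolding subalgebra_def by (simp add: sets_hist Fn_eq_region_sigma)
qed

lemma cond_iid_sum_hist:
  assumes n: "n \<ge> 1"
  shows "cond_iid_sum M (hist M (\<lambda>n \<omega>. Zcount (PP \<omega>) n) n) (\<lambda>\<omega>. Zcount (PP \<omega>) (Suc n))
           (\<lambda>\<omega>. Zcount (PP \<omega>) n) (binomial_pmf 2 (exp (- \<alpha> / 4)))"
  unfolding cond_iid_sum_def
proof
  fix k
  let ?H = "hist M (\<lambda>n \<omega>. Zcount (PP \<omega>) n) n"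
  let ?g = "\<lambda>\<omega>. pmf (iid_sum_pmf (Zcount (PP \<omega>) n) (binomial_pmf 2 (exp (- \<alpha> / 4)))) k"
  have gH: "?g \<in> borel_measurable ?H"
    using measurable_hist[of n n "\<lambda>n \<omega>. Zcount (PP \<omega>) n" M] n by measurable
  have F: "subalgebra M (Fn M PP n)"
    unfolding Fn_eq_region_sigma by (rule subalgebra_region_sigma)
  show "AE \<omega> in M. real_cond_exp M ?H (indicator {\<omega> \<in> space M. Zcount (PP \<omega>) (Suc n) = k}) \<omega> = ?g \<omega>"
  proof (rule real_cond_exp_subalgebra_eqI[OF F subalgebra_Fn_hist _ _ gH])
    show "AE \<omega> in M. real_cond_exp M (Fn M PP n) (indicator {\<omega> \<in> space M. Zcount (PP \<omega>) (Suc n) = k}) \<omega> = ?g \<omega>"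
      using cond_iid_sum_Fn[OF n] unfolding cond_iid_sum_def by blast
    have "(\<lambda>\<omega>. Zcount (PP \<omega>) n) \<in> measurable M (count_space UNIV)"
      by (rule measurable_from_subalg[OF F measurable_Zcount]) simp
    then have "?g \<in> borel_measurable M" by measurable
    then show "integrable M ?g" by (intro integrable_const_bound[where B = 1]) (simp_all add: pmf_le_1)
  qed (use Zcount_event in \<open>simp add: integrable_real_indicator emeasure_eq_measure\<close>)
qed

end

theorem mainTheorem6:
  fixes M :: "'w measure" and \<mu> :: "nat list set measure"
    and PP :: "'w \<Rightarrow> nat list set set" and \<alpha> :: real
  assumes "\<alpha> > 0"
    and "is_line_measure \<mu>"
    and "poisson_process M (scale_measure (ennreal \<alpha>) \<mu>) PP"
  shows "(\<forall>n\<ge>1. cond_iid_sum M (Fn M PP n) (\<lambda>\<omega>. Zcount (PP \<omega>) (Suc n))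
                    (\<lambda>\<omega>. Zcount (PP \<omega>) n) (binomial_pmf 2 (exp (- \<alpha> / 4))))
         \<and> galton_watson M (\<lambda>n \<omega>. Zcount (PP \<omega>) n) (binomial_pmf 2 (exp (- \<alpha> / 4)))"
proof -
  interpret line_poisson_process M \<mu> PP \<alpha> using assms by unfold_locales
  show ?thesis unfolding galton_watson_def using cond_iid_sum_Fn cond_iid_sum_hist by blast
qed

end
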